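(* Let $\mathsf P$ be a one-move rider with basic move $(c,d)$ and let $q\ge2$. Then $u_{\mathsf P}(q;n)$, as a quasipolynomial function of $n$, has period $\max(|c|,|d|)$.
   Context: A one-move rider has a single basic move $(c,d)\in\mathbb Z^2\setminus\{0\}$ with $\gcd(c,d)=1$. Pieces are placed on the $n\times n$ board $[n]^2=\{1,\dots,n\}^2$; two pieces at positions $z,z'$ attack each other if $z'-z$ is an integer multiple of $(c,d)$ (in particular if $z=z'$). $u_{\mathsf P}(q;n)$ is the number of ways to place $q$ unlabelled pieces on $[n]^2$ with no two attacking each other; it is a quasipolynomial in $n$, and its period is the least $p$ such that it is given by polynomials in $n$ depending only on $n \bmod p$. *)

theory Defs
  imports "HOL-Computational_Algebra.Polynomial"
begin

definition board :: "nat \<Rightarrow> (int \<times> int) set" where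
  "board n = {1..int n} \<times> {1..int n}"

definition attacks :: "int \<Rightarrow> int \<Rightarrow> int \<times> int \<Rightarrow> int \<times> int \<Rightarrow> bool" where
  "attacks c d z z' \<longleftrightarrow> (\<exists>k::int. fst z' - fst z = k * c \<and> snd z' - snd z = k * d)"

definition u_rider :: "int \<Rightarrow> int \<Rightarrow> nat \<Rightarrow> nat \<Rightarrow> nat" where
  "u_rider c d q n = card {S. S \<subseteq> board n \<and> card S = q \<and>
       (\<forall>z\<in>S. \<forall>z'\<in>S. z \<noteq> z' \<longrightarrow> \<not> attacks c d z z')}"

definition is_quasi_period :: "(nat \<Rightarrow> nat) \<Rightarrow> nat \<Rightarrow> bool" where
  "is_quasi_period f p \<longleftrightarrow> p > 0 \<and>
     (\<exists>P :: nat \<Rightarrow> real poly. \<forall>n\<ge>1. real (f n) = poly (P (n mod p)) (real n))"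

definition quasi_period :: "(nat \<Rightarrow> nat) \<Rightarrow> nat" where
  "quasi_period f = (LEAST p. is_quasi_period f p)"

end

theory Submission
  imports Defs "HOL-Library.FuncSet"
begin

text \<open>Two squares attack each other iff they lie on a common line of direction \<open>(c, d)\<close>. The board
  splits into such lines, and a non-attacking placement of \<open>q\<close> pieces occupies \<open>q\<close> distinct lines,
  one square on each; so \<open>u(q; n)\<close> is the elementary symmetric function \<open>e\<^sub>q\<close> of the line lengths,
  and by Newton's identities a polynomial in their power sums \<open>p\<^sub>k\<close>. With \<open>a = max |c| |d|\<close> and
  \<open>b = min |c| |d|\<close>, exactly \<open>(n - j a)\<^sub>+ (n - j b)\<^sub>+\<close> squares have at least \<open>j\<close> squares of their line
  behind them; summing these counts against second differences of \<open>j\<^sup>k\<close> shows that \<open>p\<^sub>k(n)\<close> is a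
  polynomial on each residue class of \<open>n\<close> modulo \<open>a\<close>.

  For minimality one tracks the constituents of \<open>e\<^sub>q\<close> up to terms of degree \<open>2q - 4\<close>: all of them
  have leading term \<open>n\<^bsup>2q\<^esup>/q!\<close>, and the coefficient of \<open>n\<^bsup>2q-3\<^esup>\<close> in the constituent of residue \<open>s\<close>
  depends on \<open>s\<close> only through the linear coefficient \<open>(a - b) s (a - s)/a\<^sup>2 + b/3\<close> of the
  constituent of \<open>p\<^sub>2\<close>. For \<open>0 < p < a\<close> and \<open>a \<noteq> b\<close> this differs at \<open>s = a\<close> and \<open>s = a - p\<close>,
  which are congruent modulo \<open>p\<close>; and \<open>a = b\<close> forces \<open>a = 1\<close> by coprimality.\<close>

section \<open>Elementary symmetric functions and Newton's identities\<close>

definition elem_sym :: "'a set \<Rightarrow> ('a \<Rightarrow> 'b::comm_ring_1) \<Rightarrow> nat \<Rightarrow> 'b" where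
  "elem_sym W w m = (\<Sum>T | T \<subseteq> W \<and> card T = m. \<Prod>t\<in>T. w t)"

definition power_sum :: "'a set \<Rightarrow> ('a \<Rightarrow> 'b::comm_ring_1) \<Rightarrow> nat \<Rightarrow> 'b" where
  "power_sum W w i = (\<Sum>t\<in>W. w t ^ i)"

lemma elem_sym_0: "finite W \<Longrightarrow> elem_sym W w 0 = 1"
proof -
  assume "finite W"
  then have "{T. T \<subseteq> W \<and> card T = 0} = {{}}" by (auto dest: finite_subset)
  then show ?thesis by (simp add: elem_sym_def)
qed

lemma elem_sym_empty_Suc: "elem_sym {} w (Suc m) = 0"
proof -
  have "{T. T \<subseteq> {} \<and> card T = Suc m} = {}" by auto
  then show ?thesis unfolding elem_sym_def by (metis sum.empty)
qed

lemma elem_sym_insert_Suc: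
  assumes "finite W" "x \<notin> W"
  shows "elem_sym (insert x W) w (Suc m) = elem_sym W w (Suc m) + w x * elem_sym W w m"
proof -
  let ?A = "{T. T \<subseteq> W \<and> card T = Suc m}"
  let ?B = "{T. T \<subseteq> W \<and> card T = m}"
  have split: "{T. T \<subseteq> insert x W \<and> card T = Suc m} = ?A \<union> insert x ` ?B"
  proof (rule set_eqI, rule iffI)
    fix T assume T: "T \<in> {T. T \<subseteq> insert x W \<and> card T = Suc m}"
    show "T \<in> ?A \<union> insert x ` ?B"
    proof (cases "x \<in> T")
      case True
      have "finite T" using T assms by (auto dest: finite_subset)
      then have "T - {x} \<in> ?B" using T True by (auto simp: card_Diff_singleton)
      moreover have "T = insert x (T - {x})" using True by auto
      ultimately show ?thesis by blast
    next
      case False then show ?thesis using T by auto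
    qed
  next
    fix T assume "T \<in> ?A \<union> insert x ` ?B"
    then show "T \<in> {T. T \<subseteq> insert x W \<and> card T = Suc m}"
      using assms by (auto simp: card_insert_if finite_subset subset_iff)
  qed
  have fin: "finite ?A" "finite ?B" using assms by (auto intro: finite_subset[of _ "Pow W"])
  have disj: "?A \<inter> insert x ` ?B = {}" using assms by auto
  have inj: "inj_on (insert x) ?B"
    using assms unfolding inj_on_def by (metis Diff_insert_absorb mem_Collect_eq subsetD)
  have "elem_sym (insert x W) w (Suc m)
      = (\<Sum>T\<in>?A. \<Prod>t\<in>T. w t) + (\<Sum>U\<in>?B. \<Prod>t\<in>insert x U. w t)"
    unfolding elem_sym_def split sum.union_disjoint[OF fin(1) finite_imageI[OF fin(2)] disj]
    by (simp add: sum.reindex[OF inj])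
  also have "(\<Sum>U\<in>?B. \<Prod>t\<in>insert x U. w t) = (\<Sum>U\<in>?B. w x * (\<Prod>t\<in>U. w t))"
    using assms by (intro sum.cong refl) (metis finite_subset mem_Collect_eq prod.insert subsetD)
  finally show ?thesis by (simp add: elem_sym_def sum_distrib_left)
qed

lemma elem_sym_insert:
  assumes "finite W" "x \<notin> W"
  shows "elem_sym (insert x W) w k = elem_sym W w k + (if k = 0 then 0 else w x * elem_sym W w (k - 1))"
  using elem_sym_insert_Suc[OF assms, of w "k - 1"] assms by (cases k) (simp_all add: elem_sym_0)

lemma newton_identity_step:
  fixes e :: "nat \<Rightarrow> 'a::comm_ring_1"
  shows "(\<Sum>i<Suc m. (-1)^i * e (Suc m - Suc i) * w ^ Suc i)
       + (\<Sum>i<Suc m. (-1)^i * (if Suc m - Suc i = 0 then 0 else w * e (Suc m - Suc i - 1)) * w ^ Suc i)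
       = w * e m"
proof -
  have "(\<Sum>i<Suc m. (-1)^i * e (Suc m - Suc i) * w ^ Suc i)
     = e m * w + (\<Sum>i<m. (-1)^(Suc i) * e (m - Suc i) * w ^ Suc (Suc i))"
    by (subst sum.lessThan_Suc_shift) simp
  also have "(\<Sum>i<m. (-1)^(Suc i) * e (m - Suc i) * w ^ Suc (Suc i))
     = - (\<Sum>i<m. (-1)^i * (w * e (m - Suc i)) * w ^ Suc i)"
    by (simp add: sum_negf[symmetric] algebra_simps)
  moreover have "(\<Sum>i<Suc m. (-1)^i * (if Suc m - Suc i = 0 then 0 else w * e (Suc m - Suc i - 1)) * w ^ Suc i)
     = (\<Sum>i<m. (-1)^i * (w * e (m - Suc i)) * w ^ Suc i)"
    by (subst sum.lessThan_Suc) (auto intro!: sum.cong)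
  ultimately show ?thesis by (simp add: mult.commute)
qed

lemma newton_identity:
  assumes "finite W"
  shows "of_nat (Suc m) * elem_sym W w (Suc m)
       = (\<Sum>i<Suc m. (-1)^i * elem_sym W w (m - i) * power_sum W w (Suc i))"
  using assms
proof (induction W arbitrary: m rule: finite_induct)
  case empty
  then show ?case by (simp add: elem_sym_empty_Suc power_sum_def)
next
  case (insert x W)
  let ?e = "elem_sym W w" and ?p = "power_sum W w"
  have e': "\<And>k. elem_sym (insert x W) w k = ?e k + (if k = 0 then 0 else w x * ?e (k - 1))"
    by (rule elem_sym_insert[OF insert(1,2)])
  have p': "\<And>i. power_sum (insert x W) w i = ?p i + w x ^ i"
    using insert(1,2) by (simp add: power_sum_def)
  have IH: "\<And>m. of_nat (Suc m) * ?e (Suc m) = (\<Sum>i<Suc m. (-1)^i * ?e (m - i) * ?p (Suc i))"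
    by (rule insert.IH)
  have "(\<Sum>i<Suc m. (-1)^i * elem_sym (insert x W) w (m - i) * power_sum (insert x W) w (Suc i))
      = (\<Sum>i<Suc m. (-1)^i * ?e (m - i) * ?p (Suc i))
      + (\<Sum>i<Suc m. (-1)^i * (if m - i = 0 then 0 else w x * ?e (m - i - 1)) * ?p (Suc i))
      + ((\<Sum>i<Suc m. (-1)^i * ?e (Suc m - Suc i) * w x ^ Suc i)
      + (\<Sum>i<Suc m. (-1)^i * (if Suc m - Suc i = 0 then 0 else w x * ?e (Suc m - Suc i - 1)) * w x ^ Suc i))"
    unfolding e' p' by (simp add: sum.distrib[symmetric] algebra_simps)
  also have "(\<Sum>i<Suc m. (-1)^i * (if m - i = 0 then 0 else w x * ?e (m - i - 1)) * ?p (Suc i))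
       = w x * of_nat m * ?e m"
  proof (cases m)
    case 0 then show ?thesis by simp
  next
    case (Suc k)
    have "(\<Sum>i<Suc m. (-1)^i * (if m - i = 0 then 0 else w x * ?e (m - i - 1)) * ?p (Suc i))
       = w x * (\<Sum>i<Suc k. (-1)^i * ?e (k - i) * ?p (Suc i))"
      unfolding Suc by (subst sum.lessThan_Suc)
        (auto intro!: sum.cong simp: Suc_diff_le sum_distrib_left algebra_simps)
    then show ?thesis using IH[of k] Suc by (simp add: mult.assoc)
  qed
  also have "(\<Sum>i<Suc m. (-1)^i * ?e (Suc m - Suc i) * w x ^ Suc i)
      + (\<Sum>i<Suc m. (-1)^i * (if Suc m - Suc i = 0 then 0 else w x * ?e (Suc m - Suc i - 1)) * w x ^ Suc i)
      = w x * ?e m" by (rule newton_identity_step)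
  finally show ?case using IH[of m] e'[of "Suc m"] by (simp add: algebra_simps)
qed

lemma inj_on_image_PiE_fibres:
  "inj_on (\<lambda>h. h ` T) (Pi\<^sub>E T (\<lambda>t. {x\<in>A. f x = t}))"
proof (rule inj_onI)
  fix h h' assume h: "h \<in> Pi\<^sub>E T (\<lambda>t. {x\<in>A. f x = t})" and h': "h' \<in> Pi\<^sub>E T (\<lambda>t. {x\<in>A. f x = t})"
    and eq: "h ` T = h' ` T"
  show "h = h'"
  proof (rule PiE_ext[OF h h'])
    fix t assume t: "t \<in> T"
    then obtain t' where t': "t' \<in> T" "h t = h' t'" using eq by (metis imageE imageI)
    then show "h t = h' t" using PiE_mem[OF h t] PiE_mem[OF h' t'(1)] by simp
  qed
qed

lemma image_PiE_fibres:
  "(\<lambda>h. h ` T) ` Pi\<^sub>E T (\<lambda>t. {x\<in>A. f x = t}) = {S. S \<subseteq> A \<and> inj_on f S \<and> f ` S = T}"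
proof (intro set_eqI iffI)
  fix S assume "S \<in> (\<lambda>h. h ` T) ` Pi\<^sub>E T (\<lambda>t. {x\<in>A. f x = t})"
  then obtain h where h: "h \<in> Pi\<^sub>E T (\<lambda>t. {x\<in>A. f x = t})" and S: "S = h ` T" by blast
  have fh: "f (h t) = t" if "t \<in> T" for t using PiE_mem[OF h that] by simp
  have "inj_on f (h ` T)" by (rule inj_onI) (metis fh imageE)
  moreover have "f ` h ` T = T" using fh by (force simp: image_image)
  ultimately show "S \<in> {S. S \<subseteq> A \<and> inj_on f S \<and> f ` S = T}" using PiE_mem[OF h] S by auto
next
  fix S assume S: "S \<in> {S. S \<subseteq> A \<and> inj_on f S \<and> f ` S = T}"
  define h where "h = restrict (\<lambda>t. THE x. x \<in> S \<and> f x = t) T"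
  have h: "h t \<in> S \<and> f (h t) = t" if "t \<in> T" for t
  proof -
    have "\<exists>!x. x \<in> S \<and> f x = t" using S that by (auto simp: inj_on_def)
    then show ?thesis unfolding h_def using that theI' by simp
  qed
  have "S = h ` T"
  proof
    show "S \<subseteq> h ` T"
    proof
      fix x assume x: "x \<in> S"
      then have "f x \<in> T" using S by blast
      then have "h (f x) = x" using h[of "f x"] S x by (auto simp: inj_on_def)
      then show "x \<in> h ` T" using \<open>f x \<in> T\<close> by force
    qed
  qed (use h in auto)
  moreover have "h \<in> Pi\<^sub>E T (\<lambda>t. {x\<in>A. f x = t})" using h S unfolding h_def by (auto simp: PiE_iff)
  ultimately show "S \<in> (\<lambda>h. h ` T) ` Pi\<^sub>E T (\<lambda>t. {x\<in>A. f x = t})" by blast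
qed

lemma card_inj_subsets_with_image:
  assumes "finite T"
  shows "card {S. S \<subseteq> A \<and> inj_on f S \<and> f ` S = T} = (\<Prod>t\<in>T. card {x\<in>A. f x = t})"
  using card_image[OF inj_on_image_PiE_fibres, of T A f] card_PiE[OF assms]
  by (simp add: image_PiE_fibres)

lemma card_inj_subsets_eq_elem_sym:
  assumes "finite A"
  shows "real (card {S. S \<subseteq> A \<and> card S = q \<and> inj_on f S})
         = elem_sym (f ` A) (\<lambda>t. real (card {x\<in>A. f x = t})) q"
proof -
  let ?X = "{S. S \<subseteq> A \<and> card S = q \<and> inj_on f S}"
  let ?Y = "{T. T \<subseteq> f ` A \<and> card T = q}"
  have finX: "finite ?X" by (rule finite_subset[of _ "Pow A"]) (use assms in auto)
  have finY: "finite ?Y" by (rule finite_subset[of _ "Pow (f ` A)"]) (use assms in auto)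
  have img: "(\<lambda>S. f ` S) ` ?X \<subseteq> ?Y" by (auto simp: card_image)
  have "real (card ?X) = (\<Sum>T\<in>?Y. \<Sum>S\<in>{S \<in> ?X. f ` S = T}. 1)"
    using sum.group[OF finX finY img, of "\<lambda>_. 1::real"] by simp
  also have "\<dots> = (\<Sum>T\<in>?Y. \<Prod>t\<in>T. real (card {x\<in>A. f x = t}))"
  proof (rule sum.cong[OF refl])
    fix T assume T: "T \<in> ?Y"
    then have "finite T" using assms finite_subset by blast
    moreover have "{S \<in> ?X. f ` S = T} = {S. S \<subseteq> A \<and> inj_on f S \<and> f ` S = T}"
      using T by (auto simp: card_image)
    ultimately show "(\<Sum>S\<in>{S \<in> ?X. f ` S = T}. 1::real) = (\<Prod>t\<in>T. real (card {x\<in>A. f x = t}))"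
      using card_inj_subsets_with_image[of T A f] by simp
  qed
  finally show ?thesis by (simp add: elem_sym_def)
qed

lemma downclosed_nat_eq_lessThan:
  fixes A :: "nat set"
  assumes "finite A" "\<And>i j. i \<in> A \<Longrightarrow> j \<le> i \<Longrightarrow> j \<in> A"
  shows "A = {..<card A}"
proof (cases "A = {}")
  case True then show ?thesis by simp
next
  case False
  have "A = {..Max A}"
  proof
    show "A \<subseteq> {..Max A}" using assms(1) by auto
    show "{..Max A} \<subseteq> A" using assms(2) Max_in[OF assms(1) False] by auto
  qed
  then show ?thesis by (metis card_atMost lessThan_Suc_atMost)
qed

lemma sum_atMost_eq_sum_card_ge:
  fixes h :: "'a \<Rightarrow> nat" and G :: "nat \<Rightarrow> 'b::comm_semiring_1"
  assumes "finite A" "\<And>x. x \<in> A \<Longrightarrow> h x \<le> N"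
  shows "(\<Sum>x\<in>A. \<Sum>j\<le>h x. G j) = (\<Sum>j\<le>N. G j * of_nat (card {x\<in>A. j \<le> h x}))"
proof -
  have "(\<Sum>x\<in>A. \<Sum>j\<le>h x. G j) = (\<Sum>x\<in>A. \<Sum>j\<le>N. if j \<le> h x then G j else 0)"
  proof (rule sum.cong[OF refl])
    fix x assume "x \<in> A"
    then have "{..N} \<inter> {j. j \<le> h x} = {..h x}" using assms(2)[of x] by auto
    then show "(\<Sum>j\<le>h x. G j) = (\<Sum>j\<le>N. if j \<le> h x then G j else 0)"
      using sum.inter_restrict[of "{..N}" G "{j. j \<le> h x}"] by simp
  qed
  also have "\<dots> = (\<Sum>j\<le>N. \<Sum>x\<in>A. if j \<le> h x then G j else 0)"
    by (rule sum.swap)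
  also have "\<dots> = (\<Sum>j\<le>N. G j * of_nat (card {x\<in>A. j \<le> h x}))"
    using assms(1) by (simp add: sum.If_cases Int_def conj_commute mult.commute)
  finally show ?thesis .
qed

definition power_incr :: "nat \<Rightarrow> nat \<Rightarrow> real" where
  "power_incr k m = (real m + 1) ^ k - real m ^ k"

definition power_incr_diff :: "nat \<Rightarrow> nat \<Rightarrow> real" where
  "power_incr_diff k j = power_incr k j - (if j = 0 then 0 else power_incr k (j - 1))"

lemma sum_power_incr_diff: "(\<Sum>j\<le>m. power_incr_diff k j) = power_incr k m"
  by (induction m) (auto simp: power_incr_diff_def)

lemma power_incr_eq_sum: "power_incr k m = (\<Sum>i<k. real m ^ (k - Suc i) * (real m + 1) ^ i)"
  unfolding power_incr_def using power_diff_sumr2[of "real m + 1" k "real m"] by simp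

lemma power_incr_nonneg: "0 \<le> power_incr k m"
  unfolding power_incr_eq_sum by (intro sum_nonneg) auto

lemma power_incr_mono: "m \<le> m' \<Longrightarrow> power_incr k m \<le> power_incr k m'"
  unfolding power_incr_eq_sum by (intro sum_mono mult_mono power_mono) auto

lemma power_incr_le: "power_incr k m \<le> real k * (real m + 1) ^ (k - 1)"
proof -
  have "power_incr k m \<le> (\<Sum>i<k. (real m + 1) ^ (k - Suc i) * (real m + 1) ^ i)"
    unfolding power_incr_eq_sum by (intro sum_mono mult_right_mono power_mono) auto
  also have "\<dots> = (\<Sum>i<k. (real m + 1) ^ (k - 1))"
    by (intro sum.cong refl) (auto simp: power_add[symmetric])
  finally show ?thesis by simp
qed

lemma power_incr_diff_nonneg: "0 \<le> power_incr_diff k j"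
  unfolding power_incr_diff_def using power_incr_mono[of "j - 1" j k] power_incr_nonneg[of k j] by auto

definition power_incr_diff_poly :: "nat \<Rightarrow> real poly" where
  "power_incr_diff_poly k = [:1,1:] ^ k - smult 2 ([:0,1:] ^ k) + [:-1,1:] ^ k"

lemma power_incr_diff_eq_poly: "j \<ge> 1 \<Longrightarrow> power_incr_diff k j = poly (power_incr_diff_poly k) (real j)"
  unfolding power_incr_diff_def power_incr_def power_incr_diff_poly_def by (simp add: of_nat_diff algebra_simps)

lemma power_incr_diff_0: "k \<ge> 1 \<Longrightarrow> power_incr_diff k 0 = 1"
  unfolding power_incr_diff_def power_incr_def by simp

definition poly_fun :: "(nat \<Rightarrow> real) \<Rightarrow> bool" where
  "poly_fun F \<longleftrightarrow> (\<exists>R. \<forall>J. F J = poly R (real J))"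

lemma poly_fun_const: "poly_fun (\<lambda>J. c)"
  unfolding poly_fun_def by (rule exI[of _ "[:c:]"]) simp

lemma poly_fun_id: "poly_fun (\<lambda>J. real J)"
  unfolding poly_fun_def by (rule exI[of _ "[:0,1:]"]) simp

lemma poly_fun_add: "poly_fun F \<Longrightarrow> poly_fun G \<Longrightarrow> poly_fun (\<lambda>J. F J + G J)"
  unfolding poly_fun_def by (metis poly_add)

lemma poly_fun_diff: "poly_fun F \<Longrightarrow> poly_fun G \<Longrightarrow> poly_fun (\<lambda>J. F J - G J)"
  unfolding poly_fun_def by (metis poly_diff)

lemma poly_fun_mult: "poly_fun F \<Longrightarrow> poly_fun G \<Longrightarrow> poly_fun (\<lambda>J. F J * G J)"
  unfolding poly_fun_def by (metis poly_mult)

lemma poly_fun_power: "poly_fun F \<Longrightarrow> poly_fun (\<lambda>J. F J ^ m)"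
  by (induction m) (auto intro: poly_fun_mult poly_fun_const)

lemma poly_fun_sum: "finite A \<Longrightarrow> (\<And>i. i \<in> A \<Longrightarrow> poly_fun (F i)) \<Longrightarrow> poly_fun (\<lambda>J. \<Sum>i\<in>A. F i J)"
proof (induction A rule: finite_induct)
  case empty then show ?case by (simp add: poly_fun_const)
next
  case (insert x A) then show ?case by (simp add: poly_fun_add)
qed

lemma power_Suc_diff_binomial:
  fixes x :: real
  shows "(x + 1) ^ Suc d - x ^ Suc d = real (Suc d) * x ^ d + (\<Sum>i<d. real (Suc d choose i) * x ^ i)"
proof -
  have "(x + 1) ^ Suc d = (\<Sum>k\<le>Suc d. real (Suc d choose k) * x ^ k)"
    using binomial_ring[of x 1 "Suc d"] by simp
  also have "\<dots> = (\<Sum>k<d. real (Suc d choose k) * x ^ k) + real (Suc d) * x ^ d + x ^ Suc d"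
    by (simp add: lessThan_Suc_atMost[symmetric])
  finally show ?thesis by simp
qed

lemma poly_fun_sum_powers: "poly_fun (\<lambda>J. \<Sum>j=1..J. real j ^ d)"
proof (induction d rule: less_induct)
  case (less d)
  define S where "S e J = (\<Sum>j=1..J. real j ^ e)" for e J
  have key: "real (Suc J) ^ Suc d - 1 = real (Suc d) * S d J + (\<Sum>i<d. real (Suc d choose i) * S i J)" for J
  proof -
    have "real (Suc J) ^ Suc d - 1 = (\<Sum>j=1..J. real (Suc j) ^ Suc d - real j ^ Suc d)"
      using sum_Suc_diff[of 1 J "\<lambda>j. real j ^ Suc d"] by simp
    also have "\<dots> = (\<Sum>j=1..J. real (Suc d) * real j ^ d + (\<Sum>i<d. real (Suc d choose i) * real j ^ i))"
    proof (rule sum.cong[OF refl])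
      fix j
      have "real (Suc j) ^ Suc d - real j ^ Suc d = (real j + 1) ^ Suc d - real j ^ Suc d" by (simp add: add.commute)
      also have "\<dots> = real (Suc d) * real j ^ d + (\<Sum>i<d. real (Suc d choose i) * real j ^ i)"
        by (rule power_Suc_diff_binomial)
      finally show "real (Suc j) ^ Suc d - real j ^ Suc d = real (Suc d) * real j ^ d + (\<Sum>i<d. real (Suc d choose i) * real j ^ i)" .
    qed
    also have "\<dots> = real (Suc d) * S d J + (\<Sum>i<d. real (Suc d choose i) * S i J)"
      by (simp add: S_def sum.distrib sum_distrib_left) (rule sum.swap)
    finally show ?thesis .
  qed
  have eq: "S d J = (real (Suc J) ^ Suc d - 1 - (\<Sum>i<d. real (Suc d choose i) * S i J)) / real (Suc d)" for J
    using key[of J] by (simp add: field_simps)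
  have "poly_fun (\<lambda>J. (real (Suc J) ^ Suc d - 1 - (\<Sum>i<d. real (Suc d choose i) * S i J)) * (1 / real (Suc d)))"
    using less unfolding S_def
    by (intro poly_fun_mult poly_fun_diff poly_fun_power poly_fun_sum poly_fun_const)
       (auto simp: poly_fun_add poly_fun_id poly_fun_const poly_fun_mult)
  then show ?case using eq unfolding S_def by simp
qed

lemma poly_fun_sum_poly: "poly_fun (\<lambda>J. \<Sum>j=1..J. poly P (real j))"
proof -
  have "(\<Sum>j=1..J. poly P (real j)) = (\<Sum>i\<le>degree P. coeff P i * (\<Sum>j=1..J. real j ^ i))" for J
  proof -
    have "(\<Sum>j=1..J. poly P (real j)) = (\<Sum>j=1..J. \<Sum>i\<le>degree P. coeff P i * real j ^ i)"
      by (simp add: poly_altdef)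
    also have "\<dots> = (\<Sum>i\<le>degree P. \<Sum>j=1..J. coeff P i * real j ^ i)" by (rule sum.swap)
    finally show ?thesis by (simp add: sum_distrib_left)
  qed
  moreover have "poly_fun (\<lambda>J. \<Sum>i\<le>degree P. coeff P i * (\<Sum>j=1..J. real j ^ i))"
    by (intro poly_fun_sum poly_fun_mult poly_fun_const poly_fun_sum_powers) auto
  ultimately show ?thesis by simp
qed

section \<open>Quasipolynomials\<close>

text \<open>Residues are taken in \<open>{1..a}\<close> rather than \<open>{0..<a}\<close>, so that the progressions \<open>a * J + s\<close>
  only contain \<open>n \<ge> 1\<close>; \<open>constituent a f s\<close> is meaningful only when \<open>quasipoly a f\<close> holds.\<close>

definition quasipoly :: "nat \<Rightarrow> (nat \<Rightarrow> real) \<Rightarrow> bool" where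
  "quasipoly a f \<longleftrightarrow> (\<forall>s\<in>{1..a}. \<exists>P. \<forall>J. f (a * J + s) = poly P (real (a * J + s)))"

definition constituent :: "nat \<Rightarrow> (nat \<Rightarrow> real) \<Rightarrow> nat \<Rightarrow> real poly" where
  "constituent a f s = (SOME P. \<forall>J. f (a * J + s) = poly P (real (a * J + s)))"

lemma poly_eq_on_progression:
  assumes "a \<ge> 1" "\<And>J. poly P (real (a * J + s)) = poly P' (real (a * J + s))"
  shows "P = P'"
proof (rule ccontr)
  assume "P \<noteq> P'"
  then have "P - P' \<noteq> 0" by simp
  then have fin: "finite {x. poly (P - P') x = 0}" by (rule poly_roots_finite)
  have "range (\<lambda>J. real (a * J + s)) \<subseteq> {x. poly (P - P') x = 0}" using assms(2) by auto
  then have "finite (range (\<lambda>J. real (a * J + s)))" using fin finite_subset by blast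
  moreover have "inj (\<lambda>J. real (a * J + s))" using assms(1) by (auto simp: inj_on_def)
  ultimately show False using finite_imageD infinite_UNIV_nat by blast
qed

lemma constituent_eq: "quasipoly a f \<Longrightarrow> s \<in> {1..a} \<Longrightarrow> f (a * J + s) = poly (constituent a f s) (real (a * J + s))"
proof -
  assume q: "quasipoly a f" and s: "s \<in> {1..a}"
  then obtain P where P: "\<forall>J. f (a * J + s) = poly P (real (a * J + s))" unfolding quasipoly_def by blast
  have "\<forall>J. f (a * J + s) = poly (constituent a f s) (real (a * J + s))"
    unfolding constituent_def by (rule someI[of _ P]) (rule P)
  then show ?thesis by blast
qed

lemma constituent_unique:
  assumes "a \<ge> 1" "\<And>J. f (a * J + s) = poly P (real (a * J + s))"
  shows "constituent a f s = P"
proof -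
  have "\<forall>J. f (a * J + s) = poly (constituent a f s) (real (a * J + s))"
    unfolding constituent_def by (rule someI[of _ P]) (use assms in auto)
  then show ?thesis using poly_eq_on_progression[OF assms(1)] assms(2) by metis
qed

lemma quasipoly_from_poly_fun:
  assumes "a \<ge> 1" "\<And>s. s \<in> {1..a} \<Longrightarrow> poly_fun (\<lambda>J. f (a * J + s))"
  shows "quasipoly a f"
  unfolding quasipoly_def
proof
  fix s assume s: "s \<in> {1..a}"
  obtain R where R: "\<And>J. f (a * J + s) = poly R (real J)" using assms(2)[OF s] by (auto simp: poly_fun_def)
  have "f (a * J + s) = poly (pcompose R [:- real s / real a, 1 / real a:]) (real (a * J + s))" for J
  proof -
    have "poly [:- real s / real a, 1 / real a:] (real (a * J + s)) = real J"
      using assms(1) by (simp add: field_simps)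
    then show ?thesis by (simp add: R poly_pcompose)
  qed
  then show "\<exists>P. \<forall>J. f (a * J + s) = poly P (real (a * J + s))" by blast
qed

lemma quasipoly_add: "quasipoly a f \<Longrightarrow> quasipoly a h \<Longrightarrow> quasipoly a (\<lambda>n. f n + h n)"
  unfolding quasipoly_def by (metis poly_add)

lemma quasipoly_mult: "quasipoly a f \<Longrightarrow> quasipoly a h \<Longrightarrow> quasipoly a (\<lambda>n. f n * h n)"
  unfolding quasipoly_def by (metis poly_mult)

lemma quasipoly_const: "quasipoly a (\<lambda>n. r)"
  unfolding quasipoly_def by (auto intro: exI[of _ "[:r:]"])

lemma quasipoly_sum: "finite A \<Longrightarrow> (\<And>i. i \<in> A \<Longrightarrow> quasipoly a (F i)) \<Longrightarrow> quasipoly a (\<lambda>n. \<Sum>i\<in>A. F i n)"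
proof (induction A rule: finite_induct)
  case empty then show ?case by (simp add: quasipoly_const)
next
  case (insert x A) then show ?case by (simp add: quasipoly_add)
qed

lemma constituent_const: "a \<ge> 1 \<Longrightarrow> constituent a (\<lambda>n. r) s = [:r:]"
  by (rule constituent_unique) auto

lemma Suc_pred_mod:
  fixes a n :: nat
  assumes "a \<ge> 1" "n \<ge> 1"
  shows "(n - 1) mod a + 1 = (if n mod a = 0 then a else n mod a)"
proof -
  obtain n' where n: "n = Suc n'" using assms(2) by (cases n) auto
  have "n' mod a < a" using assms(1) by simp
  then show ?thesis unfolding n using mod_Suc[of n' a] by auto
qed

lemma tendsto_power_div_power_at_top:
  assumes "i \<le> D"
  shows "((\<lambda>x::real. x ^ i / x ^ D) \<longlongrightarrow> (if i = D then 1 else 0)) at_top"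
proof (cases "i = D")
  case True
  have "eventually (\<lambda>x::real. x ^ i / x ^ D = 1) at_top"
    using eventually_gt_at_top[of 0] by eventually_elim (simp add: True)
  with True show ?thesis by (simp add: tendsto_eventually)
next
  case False
  then have "i < D" using assms by simp
  have "((\<lambda>x::real. inverse (x ^ (D - i))) \<longlongrightarrow> 0) at_top"
    by (intro tendsto_inverse_0_at_top filterlim_pow_at_top filterlim_ident) (use \<open>i < D\<close> in auto)
  moreover have "eventually (\<lambda>x::real. inverse (x ^ (D - i)) = x ^ i / x ^ D) at_top"
    using eventually_gt_at_top[of 0]
  proof eventually_elim
    case (elim x)
    have "x ^ D = x ^ i * x ^ (D - i)" using \<open>i < D\<close> by (simp add: power_add[symmetric])
    then show ?case using elim by (simp add: field_simps)
  qed
  ultimately show ?thesis using False by (simp add: tendsto_cong)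
qed

lemma tendsto_poly_div_power:
  fixes P :: "real poly"
  assumes "degree P \<le> D"
  shows "((\<lambda>x. poly P x / x ^ D) \<longlongrightarrow> coeff P D) at_top"
proof -
  have "poly P x = (\<Sum>i\<le>D. coeff P i * x ^ i)" for x
    unfolding poly_altdef by (rule sum.mono_neutral_left) (use assms in \<open>auto simp: coeff_eq_0\<close>)
  then have eq: "poly P x / x ^ D = (\<Sum>i\<le>D. coeff P i * (x ^ i / x ^ D))" for x :: real
    by (simp add: sum_divide_distrib)
  have "((\<lambda>x::real. \<Sum>i\<le>D. coeff P i * (x ^ i / x ^ D)) \<longlongrightarrow> (\<Sum>i\<le>D. coeff P i * (if i = D then 1 else 0))) at_top"
    by (intro tendsto_sum tendsto_mult_left tendsto_power_div_power_at_top) auto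
  moreover have "(\<Sum>i\<le>D. coeff P i * (if i = D then 1 else 0)) = coeff P D"
    by (subst sum.cong[OF refl, of _ _ "\<lambda>i. if i = D then coeff P i else 0"]) auto
  ultimately show ?thesis unfolding eq by simp
qed

lemma tendsto_poly_progression_div_power:
  fixes P :: "real poly"
  assumes "degree P \<le> D" "a > 0"
  shows "(\<lambda>J. poly P (a * real J + t) / real J ^ D) \<longlonglongrightarrow> coeff P D * a ^ D"
proof -
  have fl: "filterlim (\<lambda>J. a * real J + t) at_top sequentially"
  proof -
    have "filterlim (\<lambda>J. real J * a) at_top sequentially"
      by (rule filterlim_at_top_mult_tendsto_pos[OF tendsto_const assms(2) filterlim_real_sequentially])
    then have "filterlim (\<lambda>J. t + real J * a) at_top sequentially"
      by (rule filterlim_tendsto_add_at_top[OF tendsto_const])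
    then show ?thesis by (simp add: algebra_simps)
  qed
  have 1: "(\<lambda>J. poly P (a * real J + t) / (a * real J + t) ^ D) \<longlonglongrightarrow> coeff P D"
    using filterlim_compose[OF tendsto_poly_div_power[OF assms(1)] fl] by simp
  have 2: "(\<lambda>J. ((a * real J + t) / real J) ^ D) \<longlonglongrightarrow> a ^ D"
  proof -
    have "(\<lambda>J. a + t * inverse (real J)) \<longlonglongrightarrow> a + t * 0"
      by (intro tendsto_add tendsto_mult tendsto_const tendsto_inverse_0_at_top filterlim_real_sequentially)
    moreover have "eventually (\<lambda>J. a + t * inverse (real J) = (a * real J + t) / real J) sequentially"
      using eventually_gt_at_top[of "0::nat"] by eventually_elim (simp add: field_simps)
    ultimately have "(\<lambda>J. (a * real J + t) / real J) \<longlonglongrightarrow> a"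
      using Lim_transform_eventually by fastforce
    then show ?thesis by (intro tendsto_power)
  qed
  have "(\<lambda>J. poly P (a * real J + t) / (a * real J + t) ^ D * ((a * real J + t) / real J) ^ D) \<longlonglongrightarrow> coeff P D * a ^ D"
    by (rule tendsto_mult[OF 1 2])
  moreover have "eventually (\<lambda>J. poly P (a * real J + t) / (a * real J + t) ^ D * ((a * real J + t) / real J) ^ D
      = poly P (a * real J + t) / real J ^ D) sequentially"
  proof -
    have "eventually (\<lambda>J. a * real J + t > 0) sequentially"
      using fl by (simp add: filterlim_at_top_dense)
    then show ?thesis
      using eventually_gt_at_top[of "0::nat"] by eventually_elim (simp add: field_simps power_divide)
  qed
  ultimately show ?thesis by (rule Lim_transform_eventually)
qed

lemma degree_le_from_growth:
  fixes P :: "real poly"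
  assumes "a \<ge> 1" "\<And>J. \<bar>poly P (real (a * J + s))\<bar> \<le> C * real (a * J + s) ^ m"
  shows "degree P \<le> m"
proof (rule ccontr)
  assume "\<not> degree P \<le> m"
  then have mD: "m < degree P" by simp
  define D where "D = degree P"
  have "(\<lambda>J. poly P (real a * real J + real s) / real J ^ D) \<longlonglongrightarrow> coeff P D * real a ^ D"
    by (rule tendsto_poly_progression_div_power) (use assms in \<open>auto simp: D_def\<close>)
  then have L1: "(\<lambda>J. poly P (real a * real J + real s) / real J ^ D) \<longlonglongrightarrow> lead_coeff P * real a ^ D"
    by (simp add: D_def)
  have "(\<lambda>J. poly (smult C (monom 1 m)) (real a * real J + real s) / real J ^ D) \<longlonglongrightarrow> coeff (smult C (monom 1 m)) D * real a ^ D"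
    by (rule tendsto_poly_progression_div_power) (use assms mD in \<open>auto simp: D_def degree_monom_eq intro: order.trans[OF degree_smult_le]\<close>)
  then have L2: "(\<lambda>J. C * (real a * real J + real s) ^ m / real J ^ D) \<longlonglongrightarrow> 0"
    using mD by (simp add: poly_monom D_def)
  have "(\<lambda>J. poly P (real a * real J + real s) / real J ^ D) \<longlonglongrightarrow> 0"
  proof (rule tendsto_0_le[OF L2, of _ 1])
    show "eventually (\<lambda>J. norm (poly P (real a * real J + real s) / real J ^ D) \<le> norm (C * (real a * real J + real s) ^ m / real J ^ D) * 1) sequentially"
      using eventually_gt_at_top[of "0::nat"]
    proof eventually_elim
      case (elim J)
      have "\<bar>poly P (real a * real J + real s)\<bar> \<le> C * (real a * real J + real s) ^ m"
        using assms(2)[of J] by (simp add: algebra_simps)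
      then have "\<bar>poly P (real a * real J + real s)\<bar> / real J ^ D \<le> \<bar>C * (real a * real J + real s) ^ m\<bar> / real J ^ D"
        by (intro divide_right_mono) auto
      then show ?case by (simp add: abs_divide)
    qed
  qed
  then have "lead_coeff P * real a ^ D = 0" using L1 LIMSEQ_unique by blast
  moreover have "P \<noteq> 0" using mD by auto
  ultimately show False using assms(1) by simp
qed

lemma mono_constituent_coeff_eq:
  assumes a: "a \<ge> 1" and mono: "\<And>m n. 1 \<le> m \<Longrightarrow> m \<le> n \<Longrightarrow> f m \<le> f n"
    and q: "quasipoly a f" and deg: "\<And>s. s \<in> {1..a} \<Longrightarrow> degree (constituent a f s) \<le> D"
    and s: "s \<in> {1..a}" and s': "s' \<in> {1..a}"
  shows "coeff (constituent a f s) D = coeff (constituent a f s') D"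
proof -
  have le: "coeff (constituent a f s1) D \<le> coeff (constituent a f s2) D" if s1: "s1 \<in> {1..a}" and s2: "s2 \<in> {1..a}" for s1 s2
  proof -
    have L1: "(\<lambda>J. poly (constituent a f s1) (real a * real J + real s1) / real J ^ D) \<longlonglongrightarrow> coeff (constituent a f s1) D * real a ^ D"
      by (rule tendsto_poly_progression_div_power) (use a deg s1 in auto)
    have L2: "(\<lambda>J. poly (constituent a f s2) (real a * real J + real (a + s2)) / real J ^ D) \<longlonglongrightarrow> coeff (constituent a f s2) D * real a ^ D"
      by (rule tendsto_poly_progression_div_power) (use a deg s2 in auto)
    have "coeff (constituent a f s1) D * real a ^ D \<le> coeff (constituent a f s2) D * real a ^ D"
    proof (rule LIMSEQ_le[OF L1 L2], intro exI allI impI)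
      fix J :: nat
      have "f (a * J + s1) \<le> f (a * (Suc J) + s2)" by (rule mono) (use s1 s2 in auto)
      then have "poly (constituent a f s1) (real (a * J + s1)) \<le> poly (constituent a f s2) (real (a * Suc J + s2))"
        using constituent_eq[OF q s1] constituent_eq[OF q s2] by metis
      then have "poly (constituent a f s1) (real a * real J + real s1) \<le> poly (constituent a f s2) (real a * real J + real (a + s2))"
        by (simp add: algebra_simps)
      then show "poly (constituent a f s1) (real a * real J + real s1) / real J ^ D \<le> poly (constituent a f s2) (real a * real J + real (a + s2)) / real J ^ D"
        by (intro divide_right_mono) auto
    qed
    then show ?thesis using a by simp
  qed
  show ?thesis using le[OF s s'] le[OF s' s] by simp
qed

text \<open>The bound is an integer so that bounds such as \<open>2 * q - 4\<close> may be negative, meaning \<open>X = 0\<close>.\<close>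

definition deg_le :: "'a::comm_ring_1 poly \<Rightarrow> int \<Rightarrow> bool" where
  "deg_le X m \<longleftrightarrow> (\<forall>i. int i > m \<longrightarrow> coeff X i = 0)"

lemma deg_le_0 [simp]: "deg_le 0 m" by (simp add: deg_le_def)
lemma deg_le_add: "deg_le X m \<Longrightarrow> deg_le Y m \<Longrightarrow> deg_le (X + Y) m" by (simp add: deg_le_def)
lemma deg_le_diff: "deg_le X m \<Longrightarrow> deg_le Y m \<Longrightarrow> deg_le (X - Y) m" by (simp add: deg_le_def)
lemma deg_le_uminus: "deg_le X m \<Longrightarrow> deg_le (- X) m" by (simp add: deg_le_def)
lemma deg_le_smult: "deg_le X m \<Longrightarrow> deg_le (smult c X) m" by (simp add: deg_le_def)
lemma deg_le_mono: "deg_le X m \<Longrightarrow> m \<le> m' \<Longrightarrow> deg_le X m'" by (simp add: deg_le_def)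
lemma deg_le_degree: "degree X \<le> n \<Longrightarrow> deg_le X (int n)"
  by (auto simp: deg_le_def intro: coeff_eq_0)
lemma deg_le_monom: "deg_le (monom c n) (int n)"
  by (rule deg_le_degree) (simp add: degree_monom_le)
lemma deg_le_sum: "finite A \<Longrightarrow> (\<And>i. i \<in> A \<Longrightarrow> deg_le (F i) m) \<Longrightarrow> deg_le (\<Sum>i\<in>A. F i) m"
  by (induction A rule: finite_induct) (auto intro: deg_le_add)

lemma deg_le_mult:
  assumes "deg_le X m1" "deg_le Y m2"
  shows "deg_le (X * Y) (m1 + m2)"
  unfolding deg_le_def
proof (intro allI impI)
  fix i assume i: "int i > m1 + m2"
  have "coeff X j * coeff Y (i - j) = 0" if "j \<le> i" for j
  proof (cases "int j > m1")
    case True then show ?thesis using assms(1) by (simp add: deg_le_def)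
  next
    case False
    then have "int (i - j) > m2" using i that by (simp add: of_nat_diff)
    then show ?thesis using assms(2) by (simp add: deg_le_def)
  qed
  then show "coeff (X * Y) i = 0" unfolding coeff_mult by (intro sum.neutral) auto
qed

lemma coeff_mult_deg_le:
  assumes "deg_le X (int n1)" "deg_le Y (int n2)"
  shows "coeff (X * Y) (n1 + n2) = coeff X n1 * coeff Y n2"
proof -
  have z: "coeff X j * coeff Y (n1 + n2 - j) = 0" if "j \<le> n1 + n2" "j \<noteq> n1" for j
  proof (cases "j > n1")
    case True then show ?thesis using assms(1) by (simp add: deg_le_def)
  next
    case False
    then have "n1 + n2 - j > n2" using that by simp
    then show ?thesis using assms(2) by (simp add: deg_le_def)
  qed
  have "coeff (X * Y) (n1 + n2) = (\<Sum>j\<le>n1 + n2. coeff X j * coeff Y (n1 + n2 - j))"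
    by (simp add: coeff_mult)
  also have "\<dots> = coeff X n1 * coeff Y (n1 + n2 - n1) + (\<Sum>j\<in>{..n1 + n2} - {n1}. coeff X j * coeff Y (n1 + n2 - j))"
    by (rule sum.remove) auto
  also have "(\<Sum>j\<in>{..n1 + n2} - {n1}. coeff X j * coeff Y (n1 + n2 - j)) = 0"
    by (rule sum.neutral) (use z in auto)
  finally show ?thesis by simp
qed

lemma deg_le_minus_top:
  assumes "deg_le X (int n)"
  shows "deg_le (X - smult (coeff X n) (monom 1 n)) (int n - 1)"
  using assms unfolding deg_le_def by (auto simp: coeff_monom)

lemma deg_le_diff_same_top:
  assumes "deg_le X (int n + 1)" "deg_le Y (int n + 1)" "coeff X (Suc n) = coeff Y (Suc n)"
  shows "deg_le (X - Y) (int n)"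
  unfolding deg_le_def
proof (intro allI impI)
  fix i assume i: "int n < int i"
  show "coeff (X - Y) i = 0"
  proof (cases "i = Suc n")
    case True then show ?thesis using assms(3) by simp
  next
    case False
    then have "int i > int n + 1" using i by simp
    then show ?thesis using assms(1,2) by (simp add: deg_le_def)
  qed
qed

lemma coeff_eq_0_deg_le: "deg_le X m \<Longrightarrow> int i > m \<Longrightarrow> coeff X i = 0"
  by (simp add: deg_le_def)

lemma sum_line_products:
  fixes x a b :: real
  shows "(\<Sum>j=1..J. (x - real j * a) * (x - real j * b)) = x^2 * real J - (a + b) * x * real J * (real J + 1) / 2 + a * b * real J * (real J + 1) * (2 * real J + 1) / 6"
  by (induction J) (simp_all add: field_simps power2_eq_square)

lemma sum_weighted_line_products:
  fixes x a b :: real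
  shows "(\<Sum>j=1..J. real j * ((x - real j * a) * (x - real j * b))) = x^2 * real J * (real J + 1) / 2 - (a + b) * x * real J * (real J + 1) * (2 * real J + 1) / 6 + a * b * (real J * (real J + 1) / 2)^2"
  by (induction J) (simp_all add: field_simps power2_eq_square)

text \<open>With \<open>a = max |c| |d|\<close> and \<open>b = min |c| |d|\<close>, these are the constituents of the power sums
  \<open>p\<^sub>2\<close> and \<open>p\<^sub>3\<close> of the line lengths on the residue class of \<open>s\<close> modulo \<open>a\<close>.\<close>

definition psum2_poly :: "real \<Rightarrow> real \<Rightarrow> real \<Rightarrow> real poly" where
  "psum2_poly a b s = [: -2/3 * b * s^3 / a^2 + b * s^2 / a - b * s / 3,
                 b * s^2 / a^2 - s^2 / a - b * s / a + s + b / 3,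
                 0, 1 / a - b / (3 * a^2) :]"

definition psum3_poly :: "real \<Rightarrow> real \<Rightarrow> real \<Rightarrow> real poly" where
  "psum3_poly a b s = [: 3/2 * b * s^4 / a^3 - 3 * b * s^3 / a^2 + 3/2 * b * s^2 / a,
                 -4 * b * s^3 / a^3 + 2 * s^3 / a^2 + 6 * b * s^2 / a^2 - 3 * s^2 / a - 2 * b * s / a + s,
                 3 * b * s^2 / a^3 - 3 * s^2 / a^2 - 3 * b * s / a^2 + 3 * s / a + b / (2 * a),
                 0, 1 / a^2 - b / (2 * a^3) :]"

lemma psum2_poly_eq:
  fixes a b s J :: real
  assumes "a \<noteq> 0"
  shows "(a*J+s)^2 + 2 * ((a*J+s)^2 * J - (a + b) * (a*J+s) * J * (J + 1) / 2 + a * b * J * (J + 1) * (2 * J + 1) / 6) = poly (psum2_poly a b s) (a*J+s)"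
  using assms unfolding psum2_poly_def by (simp add: field_simps power2_eq_square power3_eq_cube)

lemma psum3_poly_eq:
  fixes a b s J :: real
  assumes "a \<noteq> 0"
  shows "(a*J+s)^2 + 6 * ((a*J+s)^2 * J * (J + 1) / 2 - (a + b) * (a*J+s) * J * (J + 1) * (2 * J + 1) / 6 + a * b * (J * (J + 1) / 2)^2) = poly (psum3_poly a b s) (a*J+s)"
  using assms unfolding psum3_poly_def by (simp add: field_simps power2_eq_square power3_eq_cube) (simp add: algebra_simps power2_eq_square power3_eq_cube eval_nat_numeral)

section \<open>Lines of a rider on the board\<close>

lemma mem_board_iff: "z \<in> board n \<longleftrightarrow> 1 \<le> fst z \<and> fst z \<le> int n \<and> 1 \<le> snd z \<and> snd z \<le> int n"
  by (cases z) (auto simp: board_def)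

lemma finite_board: "finite (board n)"
  by (simp add: board_def)

lemma card_board: "card (board n) = n * n"
  by (simp add: board_def card_cartesian_product)

locale rider =
  fixes c d :: int
  assumes nz: "(c, d) \<noteq> (0, 0)"
begin

text \<open>Walking back from \<open>z\<close> in steps of \<open>(c, d)\<close> stays on the board for exactly the steps
  \<open>0..height n z\<close>. So \<open>base n z\<close> is the first square of the line through \<open>z\<close>, and \<open>pos n z\<close> the
  index of \<open>z\<close> on that line.\<close>

definition back_steps :: "nat \<Rightarrow> int \<times> int \<Rightarrow> int set" where
  "back_steps n z = {t. (fst z - t * c, snd z - t * d) \<in> board n}"

definition height :: "nat \<Rightarrow> int \<times> int \<Rightarrow> int" where
  "height n z = Max (back_steps n z)"

definition base :: "nat \<Rightarrow> int \<times> int \<Rightarrow> int \<times> int" where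
  "base n z = (fst z - height n z * c, snd z - height n z * d)"

definition pos :: "nat \<Rightarrow> int \<times> int \<Rightarrow> nat" where
  "pos n z = nat (height n z)"

lemma back_steps_abs_le:
  assumes "z \<in> board n" "t \<in> back_steps n z"
  shows "\<bar>t\<bar> \<le> int n - 1"
proof -
  have h1: "\<bar>t * c\<bar> \<le> int n - 1" and h2: "\<bar>t * d\<bar> \<le> int n - 1"
    using assms by (auto simp: back_steps_def mem_board_iff)
  show ?thesis
  proof (cases "c = 0")
    case True
    then have "d \<noteq> 0" using nz by auto
    then have "1 \<le> \<bar>d\<bar>" by linarith
    then have "\<bar>t\<bar> * 1 \<le> \<bar>t\<bar> * \<bar>d\<bar>" by (intro mult_left_mono) auto
    then have "\<bar>t\<bar> \<le> \<bar>t * d\<bar>" by (simp add: abs_mult)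
    then show ?thesis using h2 by linarith
  next
    case False
    then have "1 \<le> \<bar>c\<bar>" by linarith
    then have "\<bar>t\<bar> * 1 \<le> \<bar>t\<bar> * \<bar>c\<bar>" by (intro mult_left_mono) auto
    then have "\<bar>t\<bar> \<le> \<bar>t * c\<bar>" by (simp add: abs_mult)
    then show ?thesis using h1 by linarith
  qed
qed

lemma finite_back_steps: "z \<in> board n \<Longrightarrow> finite (back_steps n z)"
proof -
  assume z: "z \<in> board n"
  have "\<forall>t\<in>back_steps n z. \<bar>t\<bar> \<le> int n - 1" using back_steps_abs_le[OF z] by blast
  then have "back_steps n z \<subseteq> {-(int n)..int n}" by force
  then show ?thesis by (rule finite_subset) simp
qed

lemma zero_in_back_steps: "z \<in> board n \<Longrightarrow> 0 \<in> back_steps n z"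
  by (cases z) (simp add: back_steps_def)

lemma back_steps_convex:
  assumes "t1 \<in> back_steps n z" "t2 \<in> back_steps n z" "t1 \<le> t" "t \<le> t2"
  shows "t \<in> back_steps n z"
proof -
  have c_between: "t1 * c \<le> t * c \<and> t * c \<le> t2 * c \<or> t2 * c \<le> t * c \<and> t * c \<le> t1 * c"
    using assms(3,4) by (cases "c \<ge> 0") (auto intro: mult_right_mono mult_right_mono_neg)
  have d_between: "t1 * d \<le> t * d \<and> t * d \<le> t2 * d \<or> t2 * d \<le> t * d \<and> t * d \<le> t1 * d"
    using assms(3,4) by (cases "d \<ge> 0") (auto intro: mult_right_mono mult_right_mono_neg)
  show ?thesis using assms(1,2) c_between d_between by (auto simp: back_steps_def mem_board_iff)
qed

lemma height_in_back_steps: "z \<in> board n \<Longrightarrow> height n z \<in> back_steps n z"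
  unfolding height_def by (rule Max_in) (use finite_back_steps[of z n] zero_in_back_steps[of z n] in auto)

lemma height_nonneg: "z \<in> board n \<Longrightarrow> 0 \<le> height n z"
  unfolding height_def by (rule Max_ge) (use finite_back_steps[of z n] zero_in_back_steps[of z n] in auto)

lemma height_le: "z \<in> board n \<Longrightarrow> height n z \<le> int n - 1"
  using back_steps_abs_le height_in_back_steps by fastforce

lemma back_steps_iff:
  assumes "z \<in> board n" "0 \<le> t"
  shows "t \<in> back_steps n z \<longleftrightarrow> t \<le> height n z"
proof
  assume "t \<in> back_steps n z" then show "t \<le> height n z" unfolding height_def using finite_back_steps assms by auto
next
  assume "t \<le> height n z" then show "t \<in> back_steps n z"
    using back_steps_convex[OF zero_in_back_steps height_in_back_steps] assms by blast
qed

lemma back_steps_shift: "back_steps n (fst z + k * c, snd z + k * d) = (\<lambda>t. t + k) ` back_steps n z"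
proof -
  have *: "t \<in> back_steps n (fst z + k * c, snd z + k * d) \<longleftrightarrow> t - k \<in> back_steps n z" for t
    by (simp add: back_steps_def algebra_simps)
  show ?thesis
  proof (rule set_eqI)
    fix t
    show "t \<in> back_steps n (fst z + k * c, snd z + k * d) \<longleftrightarrow> t \<in> (\<lambda>t. t + k) ` back_steps n z"
    proof
      assume "t \<in> back_steps n (fst z + k * c, snd z + k * d)"
      then have "t - k \<in> back_steps n z" using * by blast
      then show "t \<in> (\<lambda>t. t + k) ` back_steps n z" by (rule rev_image_eqI) simp
    next
      assume "t \<in> (\<lambda>t. t + k) ` back_steps n z"
      then obtain t' where "t' \<in> back_steps n z" "t = t' + k" by blast
      then show "t \<in> back_steps n (fst z + k * c, snd z + k * d)" using *[of t] by simp
    qed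
  qed
qed

lemma height_shift:
  assumes "z \<in> board n" "(fst z + k * c, snd z + k * d) \<in> board n"
  shows "height n (fst z + k * c, snd z + k * d) = height n z + k"
proof -
  have fin: "finite (back_steps n z)" using assms finite_back_steps by auto
  have "Max ((\<lambda>t. t + k) ` back_steps n z) = height n z + k"
    unfolding height_def
    by (rule Max_eqI) (use fin height_in_back_steps[OF assms(1)] in \<open>auto simp: height_def\<close>)
  then show ?thesis by (simp add: height_def back_steps_shift)
qed

lemma base_shift:
  assumes "z \<in> board n" "(fst z + k * c, snd z + k * d) \<in> board n"
  shows "base n (fst z + k * c, snd z + k * d) = base n z"
  using height_shift[OF assms] by (simp add: base_def algebra_simps)

lemma base_decomp: "z = (fst (base n z) + height n z * c, snd (base n z) + height n z * d)"
  by (simp add: base_def)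

lemma attacks_iff_same_base:
  assumes "z \<in> board n" "z' \<in> board n"
  shows "attacks c d z z' \<longleftrightarrow> base n z = base n z'"
proof
  assume "attacks c d z z'"
  then obtain k where k: "fst z' - fst z = k * c" "snd z' - snd z = k * d"
    by (auto simp: attacks_def)
  then have "z' = (fst z + k * c, snd z + k * d)" by (cases z') auto
  then show "base n z = base n z'" using base_shift[OF assms(1)] assms(2) by metis
next
  assume "base n z = base n z'"
  then show "attacks c d z z'"
    using base_decomp[of z n] base_decomp[of z' n] unfolding attacks_def
    by (intro exI[of _ "height n z' - height n z"]) (metis (no_types, lifting) add_diff_cancel_left fst_conv left_diff_distrib snd_conv)
qed

lemma card_shifted_interval:
  fixes e :: int and N :: int
  assumes "0 \<le> j"
  shows "card {x \<in> {1..N}. 1 \<le> x - j * e \<and> x - j * e \<le> N} = nat (N - j * \<bar>e\<bar>)"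
proof (cases "e \<ge> 0")
  case True
  have "0 \<le> j * e" using assms True by simp
  then have "{x \<in> {1..N}. 1 \<le> x - j * e \<and> x - j * e \<le> N} = {1 + j * e..N}" by auto
  then show ?thesis using True by simp
next
  case False
  have "j * e \<le> 0" using assms False by (simp add: mult_nonneg_nonpos)
  then have "{x \<in> {1..N}. 1 \<le> x - j * e \<and> x - j * e \<le> N} = {1..N + j * e}" by auto
  then show ?thesis using False by simp
qed

lemma card_pos_ge:
  "card {z \<in> board n. j \<le> pos n z} = nat (int n - int j * \<bar>c\<bar>) * nat (int n - int j * \<bar>d\<bar>)"
proof -
  have "{z \<in> board n. j \<le> pos n z} =
        {x \<in> {1..int n}. 1 \<le> x - int j * c \<and> x - int j * c \<le> int n} \<times>
        {y \<in> {1..int n}. 1 \<le> y - int j * d \<and> y - int j * d \<le> int n}"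
  proof -
    have "z \<in> board n \<and> j \<le> pos n z \<longleftrightarrow> z \<in> board n \<and> int j \<in> back_steps n z" for z
      using back_steps_iff[of z n "int j"] height_nonneg[of z n] by (auto simp: pos_def)
    then show ?thesis by (auto simp: back_steps_def mem_board_iff)
  qed
  then show ?thesis using card_shifted_interval[of "int j"] by (simp add: card_cartesian_product)
qed

definition line :: "nat \<Rightarrow> int \<times> int \<Rightarrow> (int \<times> int) set" where
  "line n w = {z \<in> board n. base n z = w}"

definition bases :: "nat \<Rightarrow> (int \<times> int) set" where
  "bases n = base n ` board n"

definition line_len :: "nat \<Rightarrow> int \<times> int \<Rightarrow> real" where
  "line_len n w = real (card (line n w))"

lemma finite_bases: "finite (bases n)"
  by (simp add: bases_def finite_board)

lemma u_rider_eq_elem_sym: "real (u_rider c d q n) = elem_sym (bases n) (line_len n) q"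
proof -
  have "{S. S \<subseteq> board n \<and> card S = q \<and> (\<forall>z\<in>S. \<forall>z'\<in>S. z \<noteq> z' \<longrightarrow> \<not> attacks c d z z')}
      = {S. S \<subseteq> board n \<and> card S = q \<and> inj_on (base n) S}"
    using attacks_iff_same_base by (auto simp: inj_on_def) blast+
  then show ?thesis
    unfolding u_rider_def line_len_def bases_def line_def
    by (simp add: card_inj_subsets_eq_elem_sym[OF finite_board])
qed

lemma height_eq_pos: "z \<in> board n \<Longrightarrow> height n z = int (pos n z)"
  using height_nonneg by (simp add: pos_def)

lemma inj_on_pos_line: "inj_on (pos n) (line n w)"
proof (rule inj_onI)
  fix z z' assume z: "z \<in> line n w" and z': "z' \<in> line n w" and eq: "pos n z = pos n z'"
  have "height n z = height n z'" using z z' eq height_eq_pos by (auto simp: line_def)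
  moreover have "base n z = base n z'" using z z' by (auto simp: line_def)
  ultimately show "z = z'" using base_decomp[of z n] base_decomp[of z' n] by metis
qed

lemma pos_image_line: "pos n ` line n w = {..<card (line n w)}"
proof -
  have fin: "finite (line n w)" using finite_board by (simp add: line_def)
  have dc: "j \<in> pos n ` line n w" if i: "i \<in> pos n ` line n w" and ji: "j \<le> i" for i j
  proof -
    obtain z where z: "z \<in> line n w" "i = pos n z" using i by blast
    have zb: "z \<in> board n" and pz: "base n z = w" using z by (auto simp: line_def)
    define k where "k = int j - height n z"
    have hz: "height n z = int i" using z height_eq_pos zb by simp
    have "height n z - int j \<in> back_steps n z" using back_steps_iff[OF zb, of "height n z - int j"] ji hz by simp
    then have zb': "(fst z + k * c, snd z + k * d) \<in> board n"
      by (simp add: back_steps_def k_def algebra_simps)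
    have "height n (fst z + k * c, snd z + k * d) = int j" using height_shift[OF zb zb'] by (simp add: k_def)
    then have "pos n (fst z + k * c, snd z + k * d) = j" by (simp add: pos_def)
    moreover have "(fst z + k * c, snd z + k * d) \<in> line n w"
      using base_shift[OF zb zb'] zb' pz by (simp add: line_def)
    ultimately show ?thesis by (metis image_eqI)
  qed
  have "pos n ` line n w = {..<card (pos n ` line n w)}"
    by (rule downclosed_nat_eq_lessThan) (use fin dc in auto)
  then show ?thesis using card_image[OF inj_on_pos_line] by simp
qed

lemma sum_power_incr_line:
  assumes "k \<ge> 1"
  shows "(\<Sum>z\<in>line n w. power_incr k (pos n z)) = line_len n w ^ k"
proof -
  have "(\<Sum>z\<in>line n w. power_incr k (pos n z)) = (\<Sum>i\<in>pos n ` line n w. power_incr k i)"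
    by (rule sum.reindex[OF inj_on_pos_line, symmetric, unfolded comp_def])
  also have "\<dots> = (\<Sum>i<card (line n w). power_incr k i)" by (simp add: pos_image_line)
  also have "\<dots> = line_len n w ^ k"
    unfolding power_incr_def line_len_def using sum_lessThan_telescope[of "\<lambda>i. (real i) ^ k" "card (line n w)"] assms
    by (simp add: add.commute)
  finally show ?thesis .
qed

lemma pos_less: "z \<in> board n \<Longrightarrow> pos n z < n"
  using height_le[of z n] height_nonneg[of z n] by (simp add: pos_def)

lemma power_sum_line_len_board:
  assumes "k \<ge> 1"
  shows "power_sum (bases n) (line_len n) k = (\<Sum>z\<in>board n. power_incr k (pos n z))"
proof -
  have "power_sum (bases n) (line_len n) k = (\<Sum>w\<in>bases n. \<Sum>z\<in>line n w. power_incr k (pos n z))"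
    unfolding power_sum_def using sum_power_incr_line[OF assms] by simp
  also have "\<dots> = (\<Sum>z\<in>board n. power_incr k (pos n z))"
    unfolding line_def bases_def by (rule sum.group) (auto simp: finite_board)
  finally show ?thesis .
qed

lemma power_sum_line_len:
  assumes "k \<ge> 1"
  shows "power_sum (bases n) (line_len n) k
    = (\<Sum>j\<le>n. power_incr_diff k j * real (nat (int n - int j * \<bar>c\<bar>) * nat (int n - int j * \<bar>d\<bar>)))"
proof -
  have "power_sum (bases n) (line_len n) k = (\<Sum>z\<in>board n. \<Sum>j\<le>pos n z. power_incr_diff k j)"
    unfolding power_sum_line_len_board[OF assms] sum_power_incr_diff ..
  also have "\<dots> = (\<Sum>j\<le>n. power_incr_diff k j * real (card {z \<in> board n. j \<le> pos n z}))"
    by (rule sum_atMost_eq_sum_card_ge) (auto simp: finite_board less_imp_le pos_less)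
  finally show ?thesis by (simp add: card_pos_ge)
qed

definition amax :: nat where "amax = nat (max \<bar>c\<bar> \<bar>d\<bar>)"
definition bmin :: nat where "bmin = nat (min \<bar>c\<bar> \<bar>d\<bar>)"

lemma amax_ge1: "amax \<ge> 1"
  unfolding amax_def using nz by auto

lemma bmin_le_amax: "bmin \<le> amax"
  unfolding amax_def bmin_def by auto

definition line_psum :: "nat \<Rightarrow> nat \<Rightarrow> real" where
  "line_psum k n = power_sum (bases n) (line_len n) k"

definition line_esym :: "nat \<Rightarrow> nat \<Rightarrow> real" where
  "line_esym q n = elem_sym (bases n) (line_len n) q"

lemma nat_prod_abs_moves:
  "nat (int n - int j * \<bar>c\<bar>) * nat (int n - int j * \<bar>d\<bar>) = nat (int n - int j * int amax) * nat (int n - int j * int bmin)"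
  unfolding amax_def bmin_def by (cases "\<bar>c\<bar> \<le> \<bar>d\<bar>") (auto simp: max_def min_def)

lemma line_psum_formula:
  assumes "k \<ge> 1"
  shows "line_psum k n = (\<Sum>j\<le>n. power_incr_diff k j * real (nat (int n - int j * int amax) * nat (int n - int j * int bmin)))"
  unfolding line_psum_def power_sum_line_len[OF assms] nat_prod_abs_moves ..

lemma line_psum_progression:
  assumes k: "k \<ge> 1" and s: "s \<in> {1..amax}"
  shows "line_psum k (amax * J + s) = real (amax * J + s) ^ 2 +
     (\<Sum>j=1..J. poly (power_incr_diff_poly k) (real j) * ((real (amax * J + s) - real j * real amax) * (real (amax * J + s) - real j * real bmin)))"
proof -
  let ?n = "amax * J + s"
  let ?f = "\<lambda>j. power_incr_diff k j * real (nat (int ?n - int j * int amax) * nat (int ?n - int j * int bmin))"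
  have "1 * J \<le> amax * J" by (rule mult_le_mono1[OF amax_ge1])
  then have "J \<le> amax * J" by simp
  then have Jn: "J \<le> ?n" by linarith
  have zero: "?f j = 0" if "J < j" for j
  proof -
    have "amax * (J + 1) \<le> amax * j" using that by (intro mult_le_mono2) simp
    then have "amax * J + s \<le> j * amax" using s by (simp add: algebra_simps)
    then have "int (amax * J + s) \<le> int j * int amax" by (metis of_nat_le_iff of_nat_mult)
    then show ?thesis by simp
  qed
  have "line_psum k ?n = (\<Sum>j\<le>?n. ?f j)" by (rule line_psum_formula[OF k])
  also have "\<dots> = (\<Sum>j\<le>J. ?f j)"
    by (rule sum.mono_neutral_right) (use Jn zero in auto)
  also have "\<dots> = ?f 0 + (\<Sum>j=1..J. ?f j)"
  proof -
    have "{..J} = insert 0 {1..J}" by auto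
    then show ?thesis by simp
  qed
  also have "?f 0 = real ?n ^ 2" using power_incr_diff_0[OF k] by (simp add: power2_eq_square)
  also have "(\<Sum>j=1..J. ?f j) = (\<Sum>j=1..J. poly (power_incr_diff_poly k) (real j) * ((real ?n - real j * real amax) * (real ?n - real j * real bmin)))"
  proof (rule sum.cong[OF refl])
    fix j assume j: "j \<in> {1..J}"
    have "j * amax \<le> J * amax" using j by (intro mult_le_mono1) simp
    then have "j * amax \<le> J * amax + s" by linarith
    then have "j * amax \<le> ?n" by (simp add: mult.commute)
    then have h1: "int j * int amax \<le> int ?n" by (metis of_nat_le_iff of_nat_mult)
    have "j * bmin \<le> j * amax" using bmin_le_amax by (intro mult_le_mono2)
    then have "j * bmin \<le> ?n" using \<open>j * amax \<le> ?n\<close> by linarith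
    then have h2: "int j * int bmin \<le> int ?n" by (metis of_nat_le_iff of_nat_mult)
    have "real (nat (int ?n - int j * int amax) * nat (int ?n - int j * int bmin)) = (real ?n - real j * real amax) * (real ?n - real j * real bmin)"
      using h1 h2 by (simp add: of_nat_diff)
    then show "?f j = poly (power_incr_diff_poly k) (real j) * ((real ?n - real j * real amax) * (real ?n - real j * real bmin))"
      using power_incr_diff_eq_poly[of j k] j by simp
  qed
  finally show ?thesis .
qed

lemma quasipoly_line_psum:
  assumes k: "k \<ge> 1"
  shows "quasipoly amax (line_psum k)"
proof (rule quasipoly_from_poly_fun[OF amax_ge1])
  fix s assume s: "s \<in> {1..amax}"
  define X where "X J = real (amax * J + s)" for J
  have XJ: "poly_fun X" unfolding X_def
    using poly_fun_add[OF poly_fun_mult[OF poly_fun_const[of "real amax"] poly_fun_id] poly_fun_const[of "real s"]] by simp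
  have eq: "line_psum k (amax * J + s) = X J ^ 2 + (X J ^ 2 * (\<Sum>j=1..J. poly (power_incr_diff_poly k) (real j))
       - (real amax + real bmin) * X J * (\<Sum>j=1..J. poly ([:0,1:] * power_incr_diff_poly k) (real j))
       + real amax * real bmin * (\<Sum>j=1..J. poly ([:0,0,1:] * power_incr_diff_poly k) (real j)))" for J
  proof -
    have trm: "poly (power_incr_diff_poly k) (real j) * ((X J - real j * real amax) * (X J - real j * real bmin))
      = X J ^ 2 * poly (power_incr_diff_poly k) (real j) - (real amax + real bmin) * X J * poly ([:0,1:] * power_incr_diff_poly k) (real j)
        + real amax * real bmin * poly ([:0,0,1:] * power_incr_diff_poly k) (real j)" for j
      by (simp add: algebra_simps power2_eq_square)
    have "line_psum k (amax * J + s) = X J ^ 2 + (\<Sum>j=1..J. poly (power_incr_diff_poly k) (real j) * ((X J - real j * real amax) * (X J - real j * real bmin)))"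
      unfolding line_psum_progression[OF k s] X_def ..
    also have "(\<Sum>j=1..J. poly (power_incr_diff_poly k) (real j) * ((X J - real j * real amax) * (X J - real j * real bmin)))
      = (\<Sum>j=1..J. X J ^ 2 * poly (power_incr_diff_poly k) (real j) - (real amax + real bmin) * X J * poly ([:0,1:] * power_incr_diff_poly k) (real j)
        + real amax * real bmin * poly ([:0,0,1:] * power_incr_diff_poly k) (real j))"
      using trm by simp
    also have "\<dots> = X J ^ 2 * (\<Sum>j=1..J. poly (power_incr_diff_poly k) (real j))
       - (real amax + real bmin) * X J * (\<Sum>j=1..J. poly ([:0,1:] * power_incr_diff_poly k) (real j))
       + real amax * real bmin * (\<Sum>j=1..J. poly ([:0,0,1:] * power_incr_diff_poly k) (real j))"
      by (simp only: sum.distrib sum_subtractf sum_distrib_left)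
    finally show ?thesis .
  qed
  show "poly_fun (\<lambda>J. line_psum k (amax * J + s))"
    unfolding eq
    by (intro poly_fun_add poly_fun_diff poly_fun_mult poly_fun_power poly_fun_const XJ poly_fun_sum_poly)
qed

lemma line_psum_growth:
  assumes "k \<ge> 1"
  shows "\<bar>line_psum k n\<bar> \<le> real k * real n ^ (k + 1)"
proof -
  have "\<bar>line_psum k n\<bar> = (\<Sum>z\<in>board n. power_incr k (pos n z))"
    using power_sum_line_len_board[OF assms] power_incr_nonneg unfolding line_psum_def by (simp add: sum_nonneg)
  also have "\<dots> \<le> (\<Sum>z\<in>board n. real k * real n ^ (k - 1))"
  proof (rule sum_mono)
    fix z assume z: "z \<in> board n"
    have "real (pos n z) + 1 \<le> real n" using pos_less[OF z] by linarith
    then have "(real (pos n z) + 1) ^ (k - 1) \<le> real n ^ (k - 1)" by (intro power_mono) auto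
    then show "power_incr k (pos n z) \<le> real k * real n ^ (k - 1)"
      using power_incr_le[of k "pos n z"] by (meson mult_left_mono of_nat_0_le_iff order_trans)
  qed
  also have "\<dots> = real k * real n ^ (k + 1)"
  proof -
    obtain k' where k': "k = Suc k'" using assms by (cases k) auto
    show ?thesis by (simp add: card_board k' algebra_simps)
  qed
  finally show ?thesis .
qed

lemma line_psum_mono:
  assumes "k \<ge> 1" "m \<le> n"
  shows "line_psum k m \<le> line_psum k n"
proof -
  have "line_psum k m = (\<Sum>j\<le>m. power_incr_diff k j * real (nat (int m - int j * int amax) * nat (int m - int j * int bmin)))"
    by (rule line_psum_formula[OF assms(1)])
  also have "\<dots> \<le> (\<Sum>j\<le>m. power_incr_diff k j * real (nat (int n - int j * int amax) * nat (int n - int j * int bmin)))"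
    using assms(2) by (intro sum_mono mult_left_mono power_incr_diff_nonneg) (auto intro!: mult_mono)
  also have "\<dots> \<le> (\<Sum>j\<le>n. power_incr_diff k j * real (nat (int n - int j * int amax) * nat (int n - int j * int bmin)))"
    using assms(2) by (intro sum_mono2) (auto intro!: power_incr_diff_nonneg mult_nonneg_nonneg)
  also have "\<dots> = line_psum k n" by (rule line_psum_formula[OF assms(1), symmetric])
  finally show ?thesis .
qed

definition esym_const :: "nat \<Rightarrow> nat \<Rightarrow> real poly" where
  "esym_const q s = constituent amax (line_esym q) s"

definition psum_const :: "nat \<Rightarrow> nat \<Rightarrow> real poly" where
  "psum_const k s = constituent amax (line_psum k) s"

lemma line_esym_0: "line_esym 0 n = 1"
  unfolding line_esym_def by (rule elem_sym_0[OF finite_bases])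

lemma line_esym_Suc:
  "line_esym (Suc m) n = (\<Sum>i<Suc m. (-1)^i * line_esym (m - i) n * line_psum (Suc i) n) / real (Suc m)"
  using newton_identity[OF finite_bases, of m n "line_len n"] unfolding line_esym_def line_psum_def
  by (simp add: field_simps del: of_nat_Suc)

lemma quasipoly_line_esym: "quasipoly amax (line_esym q)"
proof (induction q rule: less_induct)
  case (less q)
  show ?case
  proof (cases q)
    case 0
    then show ?thesis using quasipoly_const[of amax 1] by (simp add: line_esym_0)
  next
    case (Suc m)
    have "quasipoly amax (\<lambda>n. (\<Sum>i<Suc m. (-1)^i * line_esym (m - i) n * line_psum (Suc i) n) * (1 / real (Suc m)))"
      by (intro quasipoly_mult quasipoly_sum quasipoly_const quasipoly_line_psum less) (auto simp: Suc)
    then show ?thesis using Suc by (simp add: line_esym_Suc)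
  qed
qed

lemma esym_const_0: "esym_const 0 s = 1"
proof -
  have "line_esym 0 = (\<lambda>n. 1)" by (rule ext) (simp add: line_esym_0)
  then show ?thesis unfolding esym_const_def using constituent_const[OF amax_ge1, of 1 s] by (simp add: one_pCons)
qed

lemma esym_const_Suc:
  assumes s: "s \<in> {1..amax}"
  shows "esym_const (Suc m) s = smult (1 / real (Suc m)) (\<Sum>i<Suc m. smult ((-1)^i) (esym_const (m - i) s * psum_const (Suc i) s))"
  unfolding esym_const_def
proof (rule constituent_unique[OF amax_ge1])
  fix J
  show "line_esym (Suc m) (amax * J + s) = poly (smult (1 / real (Suc m)) (\<Sum>i<Suc m. smult ((-1)^i) (constituent amax (line_esym (m - i)) s * psum_const (Suc i) s))) (real (amax * J + s))"
    unfolding line_esym_Suc psum_const_def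
    using constituent_eq[OF quasipoly_line_esym s] constituent_eq[OF quasipoly_line_psum s]
    by (simp add: poly_sum field_simps del: of_nat_Suc)
qed

lemma psum_const_1: "s \<in> {1..amax} \<Longrightarrow> psum_const 1 s = monom 1 2"
  unfolding psum_const_def
proof (rule constituent_unique[OF amax_ge1])
  fix J assume s: "s \<in> {1..amax}"
  have "poly (power_incr_diff_poly 1) y = 0" for y by (simp add: power_incr_diff_poly_def)
  then show "line_psum 1 (amax * J + s) = poly (monom 1 2) (real (amax * J + s))"
    using line_psum_progression[of 1 s J] s by (simp add: poly_monom)
qed

lemma degree_psum_const: "k \<ge> 1 \<Longrightarrow> s \<in> {1..amax} \<Longrightarrow> degree (psum_const k s) \<le> k + 1"
  unfolding psum_const_def
  by (rule degree_le_from_growth[OF amax_ge1, of _ s "real k"])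
     (metis constituent_eq quasipoly_line_psum line_psum_growth)

text \<open>Since \<open>p\<^sub>k\<close> is monotone in \<open>n\<close>, no constituent can outgrow another.\<close>

lemma psum_const_lead_eq:
  assumes k: "k \<ge> 1" and s: "s \<in> {1..amax}" and s': "s' \<in> {1..amax}"
  shows "coeff (psum_const k s) (k + 1) = coeff (psum_const k s') (k + 1)"
proof -
  have deg: "degree (constituent amax (line_psum k) sa) \<le> k + 1" if "sa \<in> {1..amax}" for sa
    using degree_psum_const[OF k that] by (simp add: psum_const_def)
  show ?thesis unfolding psum_const_def
    by (rule mono_constituent_coeff_eq[OF amax_ge1 _ quasipoly_line_psum[OF k] deg s s']) (auto intro: line_psum_mono k)
qed

lemma psum_const_2: "s \<in> {1..amax} \<Longrightarrow> psum_const 2 s = psum2_poly (real amax) (real bmin) (real s)"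
  unfolding psum_const_def
proof (rule constituent_unique[OF amax_ge1])
  fix J assume s: "s \<in> {1..amax}"
  have "poly (power_incr_diff_poly 2) y = 2" for y by (simp add: power_incr_diff_poly_def algebra_simps power2_eq_square)
  then have "line_psum 2 (amax * J + s) = real (amax * J + s) ^ 2 + 2 * (\<Sum>j=1..J. (real (amax * J + s) - real j * real amax) * (real (amax * J + s) - real j * real bmin))"
    using line_psum_progression[of 2 s J] s by (simp add: sum_distrib_left)
  also have "\<dots> = poly (psum2_poly (real amax) (real bmin) (real s)) (real amax * real J + real s)"
    unfolding sum_line_products using psum2_poly_eq[of "real amax" "real J" "real s" "real bmin"] amax_ge1 by simp
  finally show "line_psum 2 (amax * J + s) = poly (psum2_poly (real amax) (real bmin) (real s)) (real (amax * J + s))" by simp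
qed

lemma psum_const_3: "s \<in> {1..amax} \<Longrightarrow> psum_const 3 s = psum3_poly (real amax) (real bmin) (real s)"
  unfolding psum_const_def
proof (rule constituent_unique[OF amax_ge1])
  fix J assume s: "s \<in> {1..amax}"
  have "poly (power_incr_diff_poly 3) y = 6 * y" for y by (simp add: power_incr_diff_poly_def algebra_simps power3_eq_cube)
  then have "line_psum 3 (amax * J + s) = real (amax * J + s) ^ 2 + 6 * (\<Sum>j=1..J. real j * ((real (amax * J + s) - real j * real amax) * (real (amax * J + s) - real j * real bmin)))"
    using line_psum_progression[of 3 s J] s by (simp add: sum_distrib_left mult.assoc)
  also have "\<dots> = poly (psum3_poly (real amax) (real bmin) (real s)) (real amax * real J + real s)"
    unfolding sum_weighted_line_products using psum3_poly_eq[of "real amax" "real J" "real s" "real bmin"] amax_ge1 by simp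
  finally show "line_psum 3 (amax * J + s) = poly (psum3_poly (real amax) (real bmin) (real s)) (real (amax * J + s))" by simp
qed

section \<open>Leading terms of the constituents of \<open>e\<^sub>q\<close>\<close>

definition dev_factor :: "nat \<Rightarrow> real" where
  "dev_factor q = (if q \<ge> 2 then 1 / (2 * fact (q - 2)) else 0)"

definition psum2_lin :: "nat \<Rightarrow> real" where
  "psum2_lin s = coeff (psum_const 2 s) 1"

lemma deg_le_psum_const: "k \<ge> 1 \<Longrightarrow> s \<in> {1..amax} \<Longrightarrow> deg_le (psum_const k s) (int k + 1)"
proof -
  assume "k \<ge> 1" "s \<in> {1..amax}"
  then have "deg_le (psum_const k s) (int (k + 1))" by (rule deg_le_degree[OF degree_psum_const])
  then show ?thesis by (simp add: add.commute)
qed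

lemma psum_const_diff_deg_le:
  assumes "k \<ge> 4" "s \<in> {1..amax}" "s' \<in> {1..amax}"
  shows "deg_le (psum_const k s - psum_const k s') (int k)"
  by (rule deg_le_diff_same_top) (use assms deg_le_psum_const psum_const_lead_eq[of k s s'] in auto)

lemma psum_const_3_diff_deg_le:
  assumes "s \<in> {1..amax}" "s' \<in> {1..amax}"
  shows "deg_le (psum_const 3 s - psum_const 3 s') 2"
  unfolding psum_const_3[OF assms(1)] psum_const_3[OF assms(2)] deg_le_def
proof (intro allI impI)
  fix i :: nat assume "2 < int i"
  then have "i \<ge> 3" by linarith
  then have "i = Suc (Suc (Suc (i - 3)))" by simp
  then obtain j where "i = Suc (Suc (Suc j))" by blast
  then show "coeff (psum3_poly (real amax) (real bmin) (real s) - psum3_poly (real amax) (real bmin) (real s')) i = 0"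
    by (cases j) (auto simp: psum3_poly_def coeff_pCons split: nat.splits)
qed

lemma psum_const_2_diff_linear:
  assumes "s \<in> {1..amax}" "s' \<in> {1..amax}"
  shows "deg_le (psum_const 2 s - psum_const 2 s' - smult (psum2_lin s - psum2_lin s') (monom 1 1)) 0"
  unfolding psum2_lin_def psum_const_2[OF assms(1)] psum_const_2[OF assms(2)] deg_le_def
proof (intro allI impI)
  fix i :: nat assume "0 < int i"
  then obtain j where "i = Suc j" by (cases i) auto
  then show "coeff (psum2_poly (real amax) (real bmin) (real s) - psum2_poly (real amax) (real bmin) (real s') - smult (coeff (psum2_poly (real amax) (real bmin) (real s)) 1 - coeff (psum2_poly (real amax) (real bmin) (real s')) 1) (monom 1 1)) i = 0"
    by (cases j) (auto simp: psum2_poly_def coeff_pCons coeff_monom split: nat.splits)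
qed

lemma psum_const_2_diff_deg_le:
  assumes "s \<in> {1..amax}" "s' \<in> {1..amax}"
  shows "deg_le (psum_const 2 s - psum_const 2 s') 1"
proof -
  have "psum_const 2 s - psum_const 2 s' = (psum_const 2 s - psum_const 2 s' - smult (psum2_lin s - psum2_lin s') (monom 1 1)) + smult (psum2_lin s - psum2_lin s') (monom 1 1)"
    by simp
  moreover have "deg_le (smult (psum2_lin s - psum2_lin s') (monom 1 1)) 1"
    using deg_le_smult[OF deg_le_monom[of 1 1]] by simp
  moreover have "deg_le (psum_const 2 s - psum_const 2 s' - smult (psum2_lin s - psum2_lin s') (monom 1 1)) 1"
    using deg_le_mono[OF psum_const_2_diff_linear[OF assms]] by simp
  ultimately show ?thesis using deg_le_add by metis
qed

definition esym_const_shape :: "nat \<Rightarrow> bool" where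
  "esym_const_shape q \<longleftrightarrow> (\<forall>s\<in>{1..amax}. \<forall>s'\<in>{1..amax}.
      deg_le (esym_const q s) (2 * int q) \<and> coeff (esym_const q s) (2 * q) = 1 / fact q \<and>
      deg_le (esym_const q s - esym_const q s' - smult (- dev_factor q * (psum2_lin s - psum2_lin s')) (monom 1 (2 * q - 3))) (2 * int q - 4))"

lemma esym_const_diff_deg_le:
  assumes "esym_const_shape r" "s \<in> {1..amax}" "s' \<in> {1..amax}"
  shows "deg_le (esym_const r s - esym_const r s') (2 * int r - 3)"
proof -
  let ?T = "smult (- dev_factor r * (psum2_lin s - psum2_lin s')) (monom 1 (2 * r - 3))"
  have "deg_le (esym_const r s - esym_const r s' - ?T) (2 * int r - 4)"
    using assms unfolding esym_const_shape_def by blast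
  then have R: "deg_le (esym_const r s - esym_const r s' - ?T) (2 * int r - 3)" by (rule deg_le_mono) simp
  have T: "deg_le ?T (2 * int r - 3)"
  proof (cases "r \<ge> 2")
    case True
    then have "int (2 * r - 3) = 2 * int r - 3" by simp
    then have "deg_le (smult (dev_factor r * (psum2_lin s - psum2_lin s')) (monom 1 (2 * r - 3))) (2 * int r - 3)"
      using deg_le_smult[OF deg_le_monom[of 1 "2 * r - 3"]] by simp
    then show ?thesis by (simp add: deg_le_uminus)
  next
    case False then show ?thesis by (simp add: dev_factor_def)
  qed
  have "esym_const r s - esym_const r s' = (esym_const r s - esym_const r s' - ?T) + ?T" by simp
  then show ?thesis using deg_le_add[OF R T] by simp
qed

lemma esym_const_minus_top:
  assumes "esym_const_shape r" "s \<in> {1..amax}"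
  shows "deg_le (esym_const r s - smult (1 / fact r) (monom 1 (2 * r))) (2 * int r - 1)"
proof -
  have "deg_le (esym_const r s) (int (2 * r))" using assms unfolding esym_const_shape_def by auto
  from deg_le_minus_top[OF this] show ?thesis using assms unfolding esym_const_shape_def by auto
qed

lemma esym_const_shape_0: "esym_const_shape 0"
  unfolding esym_const_shape_def by (auto simp: esym_const_0 dev_factor_def deg_le_def)

definition newton_term :: "nat \<Rightarrow> nat \<Rightarrow> nat \<Rightarrow> real poly" where
  "newton_term t m i = smult ((-1)^i) (esym_const (m - i) t * psum_const (Suc i) t)"

lemma esym_const_Suc_newton_terms:
  "t \<in> {1..amax} \<Longrightarrow> esym_const (Suc m) t = smult (1 / real (Suc m)) (\<Sum>i<Suc m. newton_term t m i)"
  using esym_const_Suc[of t m] by (simp add: newton_term_def)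

text \<open>Up to degree \<open>2 * m - 2\<close>, the difference of the \<open>i\<close>-th Newton term between two residues
  is this multiple of \<open>n ^ (2 * m - 1)\<close> times \<open>D = psum2_lin s - psum2_lin s'\<close>: the term \<open>i = 0\<close>
  inherits it from \<open>e\<^sub>m\<close>, the term \<open>i = 1\<close> from \<open>p\<^sub>2\<close>, and all other terms are too small.\<close>

definition newton_term_dev :: "nat \<Rightarrow> nat \<Rightarrow> real \<Rightarrow> real" where
  "newton_term_dev m i D = (if i = 0 then - dev_factor m * D else if i = 1 then - D / fact (m - 1) else 0)"

lemma sum_newton_term_dev: "(\<Sum>i<Suc m. newton_term_dev m i D) = - (real (Suc m) * dev_factor (Suc m) * D)"
proof -
  have sum: "(\<Sum>i<Suc m. newton_term_dev m i D) = (\<Sum>i\<in>{0, 1} \<inter> {..<Suc m}. newton_term_dev m i D)"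
    by (rule sum.mono_neutral_right) (auto simp: newton_term_dev_def)
  consider "m = 0" | "m = 1" | m' where "m = Suc (Suc m')"
    by (metis One_nat_def not0_implies_Suc)
  then show ?thesis
  proof cases
    case 3
    have f: "(fact (Suc m') :: real) = real (Suc m') * fact m'" by simp
    have "{0, 1} \<inter> {..<Suc m} = {0, 1}" using 3 by auto
    then have "(\<Sum>i<Suc m. newton_term_dev m i D) = - D / (2 * fact m') - D / (real (Suc m') * fact m')"
      unfolding sum by (simp add: 3 newton_term_dev_def dev_factor_def f)
    also have "\<dots> = - ((real (Suc m') + 2) * (1 / (2 * (real (Suc m') * fact m'))) * D)"
      by (simp add: field_simps del: of_nat_Suc)
    also have "\<dots> = - (real (Suc m) * dev_factor (Suc m) * D)"
      by (simp add: 3 dev_factor_def f del: of_nat_Suc)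
    finally show ?thesis .
  qed (auto simp: newton_term_dev_def dev_factor_def)
qed

lemma newton_term_diff_0:
  assumes shape: "esym_const_shape m" and s: "s \<in> {1..amax}" and s': "s' \<in> {1..amax}"
  shows "deg_le (newton_term s m 0 - newton_term s' m 0
      - smult (newton_term_dev m 0 (psum2_lin s - psum2_lin s')) (monom 1 (2 * m - 1))) (2 * int m - 2)"
proof -
  let ?D = "psum2_lin s - psum2_lin s'"
  let ?T = "smult (- dev_factor m * ?D) (monom 1 (2 * m - 3))"
  define R where "R = esym_const m s - esym_const m s' - ?T"
  have R: "deg_le R (2 * int m - 4)" using shape s s' unfolding R_def esym_const_shape_def by blast
  have "?T * monom 1 2 = smult (newton_term_dev m 0 ?D) (monom 1 (2 * m - 1))"
  proof (cases "m \<ge> 2")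
    case True
    then have "2 * m - 3 + 2 = 2 * m - 1" by simp
    then show ?thesis by (simp add: newton_term_dev_def mult_monom)
  qed (simp add: newton_term_dev_def dev_factor_def)
  then have "newton_term s m 0 - newton_term s' m 0 - smult (newton_term_dev m 0 ?D) (monom 1 (2 * m - 1))
      = R * monom 1 2"
    using psum_const_1[OF s] psum_const_1[OF s'] by (simp add: newton_term_def R_def algebra_simps)
  moreover have "deg_le (R * monom 1 2) (2 * int m - 4 + int 2)" by (rule deg_le_mult[OF R deg_le_monom])
  ultimately show ?thesis by simp
qed

lemma newton_term_diff_1:
  assumes shape: "esym_const_shape (m - 1)" and m: "m \<ge> 1"
    and s: "s \<in> {1..amax}" and s': "s' \<in> {1..amax}"
  shows "deg_le (newton_term s m 1 - newton_term s' m 1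
      - smult (newton_term_dev m 1 (psum2_lin s - psum2_lin s')) (monom 1 (2 * m - 1))) (2 * int m - 2)"
proof -
  let ?D = "psum2_lin s - psum2_lin s'"
  define E where "E = esym_const (m - 1) s"
  define E' where "E' = esym_const (m - 1) s'"
  define P where "P = psum_const 2 s"
  define P' where "P' = psum_const 2 s'"
  define C1 where "C1 = smult (1 / fact (m - 1)) (monom (1::real) (2 * (m - 1)))"
  define C2 where "C2 = smult ?D (monom (1::real) 1)"
  have R1: "deg_le (E' - C1) (2 * int (m - 1) - 1)"
    using esym_const_minus_top[OF shape s'] unfolding E'_def C1_def by simp
  have R2: "deg_le (P - P' - C2) 0"
    using psum_const_2_diff_linear[OF s s'] unfolding P_def P'_def C2_def by simp
  have "C1 * C2 = smult (?D / fact (m - 1)) (monom 1 (2 * m - 1))"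
  proof -
    have "2 * (m - 1) + 1 = 2 * m - 1" using m by simp
    then show ?thesis unfolding C1_def C2_def by (simp add: mult_monom)
  qed
  moreover have "newton_term_dev m 1 ?D = - (?D / fact (m - 1))"
    by (simp add: newton_term_dev_def minus_divide_left)
  ultimately have "smult (newton_term_dev m 1 ?D) (monom 1 (2 * m - 1)) = - (C1 * C2)"
    by (simp only: smult_minus_left)
  moreover have "newton_term s m 1 - newton_term s' m 1 = - (E * P - E' * P')"
    unfolding newton_term_def E_def E'_def P_def P'_def by (simp add: algebra_simps numeral_2_eq_2)
  ultimately have key: "newton_term s m 1 - newton_term s' m 1 - smult (newton_term_dev m 1 ?D) (monom 1 (2 * m - 1))
      = - ((E - E') * P) - C1 * (P - P' - C2) - (E' - C1) * (P - P')"
    by (simp add: algebra_simps)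
  have d1: "deg_le ((E - E') * P) ((2 * int (m - 1) - 3) + (int 2 + 1))"
    by (rule deg_le_mult)
      (use esym_const_diff_deg_le[OF shape s s'] deg_le_psum_const[of 2 s] s in \<open>auto simp: E_def E'_def P_def\<close>)
  have d2: "deg_le (C1 * (P - P' - C2)) (int (2 * (m - 1)) + 0)"
    unfolding C1_def by (rule deg_le_mult[OF deg_le_smult[OF deg_le_monom] R2])
  have d3: "deg_le ((E' - C1) * (P - P')) ((2 * int (m - 1) - 1) + 1)"
    by (rule deg_le_mult[OF R1]) (use psum_const_2_diff_deg_le[OF s s'] in \<open>simp add: P_def P'_def\<close>)
  have "int (m - 1) = int m - 1" using m by simp
  with d1 d2 d3 show ?thesis
    unfolding key by (auto intro!: deg_le_diff deg_le_uminus elim!: deg_le_mono)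
qed

lemma newton_term_diff_ge2:
  assumes shape: "esym_const_shape (m - i)" and i: "2 \<le> i" "i \<le> m"
    and s: "s \<in> {1..amax}" and s': "s' \<in> {1..amax}"
  shows "deg_le (newton_term s m i - newton_term s' m i) (2 * int m - 2)"
proof -
  define E where "E = esym_const (m - i) s"
  define E' where "E' = esym_const (m - i) s'"
  define P where "P = psum_const (Suc i) s"
  define P' where "P' = psum_const (Suc i) s'"
  have mi: "int (m - i) = int m - int i" using i by simp
  have d1: "deg_le ((E - E') * P) ((2 * int (m - i) - 3) + (int (Suc i) + 1))"
    by (rule deg_le_mult)
      (use esym_const_diff_deg_le[OF shape s s'] deg_le_psum_const[of "Suc i" s] s in \<open>auto simp: E_def E'_def P_def\<close>)
  have E': "deg_le E' (2 * int (m - i))" using shape s' unfolding esym_const_shape_def E'_def by blast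
  have d2: "deg_le (E' * (P - P')) (2 * int m - 2)"
  proof (cases "i = 2")
    case True
    have "deg_le (E' * (P - P')) (2 * int (m - i) + 2)"
      by (rule deg_le_mult[OF E']) (use psum_const_3_diff_deg_le[OF s s'] True in \<open>simp add: P_def P'_def\<close>)
    then show ?thesis using mi True by (auto elim: deg_le_mono)
  next
    case False
    then have "Suc i \<ge> 4" using i by simp
    have "deg_le (E' * (P - P')) (2 * int (m - i) + int (Suc i))"
      by (rule deg_le_mult[OF E']) (use psum_const_diff_deg_le[OF \<open>Suc i \<ge> 4\<close> s s'] in \<open>simp add: P_def P'_def\<close>)
    then show ?thesis using mi False i by (auto elim: deg_le_mono)
  qed
  have "newton_term s m i - newton_term s' m i = smult ((-1)^i) ((E - E') * P + E' * (P - P'))"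
    unfolding newton_term_def E_def E'_def P_def P'_def by (simp add: algebra_simps smult_diff_right)
  moreover have "deg_le ((E - E') * P + E' * (P - P')) (2 * int m - 2)"
    using d1 d2 mi i by (auto intro!: deg_le_add elim!: deg_le_mono)
  ultimately show ?thesis by (simp add: deg_le_smult)
qed

lemma newton_term_diff:
  assumes IH: "\<And>r. r \<le> m \<Longrightarrow> esym_const_shape r" and s: "s \<in> {1..amax}" and s': "s' \<in> {1..amax}"
    and i: "i < Suc m"
  shows "deg_le (newton_term s m i - newton_term s' m i
      - smult (newton_term_dev m i (psum2_lin s - psum2_lin s')) (monom 1 (2 * m - 1))) (2 * int m - 2)"
proof -
  consider "i = 0" | "i = 1" | "2 \<le> i" by linarith
  then show ?thesis
  proof cases
    case 1 then show ?thesis using newton_term_diff_0[OF IH s s'] by simp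
  next
    case 2 then show ?thesis using newton_term_diff_1[OF IH _ s s'] i by simp
  next
    case 3 then show ?thesis using newton_term_diff_ge2[OF IH _ _ s s'] i by (simp add: newton_term_dev_def)
  qed
qed

lemma deg_le_newton_term:
  assumes IH: "\<And>r. r \<le> m \<Longrightarrow> esym_const_shape r" and i: "i < Suc m" and t: "t \<in> {1..amax}"
  shows "deg_le (newton_term t m i) (2 * int m - int i + 2)"
proof -
  have "esym_const_shape (m - i)" by (rule IH) simp
  with t have "deg_le (esym_const (m - i) t) (2 * int (m - i))"
    unfolding esym_const_shape_def by blast
  then have "deg_le (esym_const (m - i) t * psum_const (Suc i) t) (2 * int (m - i) + (int (Suc i) + 1))"
    by (rule deg_le_mult[OF _ deg_le_psum_const]) (use t in auto)
  moreover have "2 * int (m - i) + (int (Suc i) + 1) = 2 * int m - int i + 2" using i by simp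
  ultimately show ?thesis unfolding newton_term_def by (metis deg_le_smult)
qed

lemma coeff_esym_const_Suc_top:
  assumes IH: "\<And>r. r \<le> m \<Longrightarrow> esym_const_shape r" and s: "s \<in> {1..amax}"
  shows "coeff (esym_const (Suc m) s) (2 * Suc m) = 1 / fact (Suc m)"
proof -
  have "deg_le (esym_const m s) (int (2 * m))" "coeff (esym_const m s) (2 * m) = 1 / fact m"
    using IH[of m] s unfolding esym_const_shape_def by auto
  then have "coeff (esym_const m s * monom 1 2) (2 * m + 2) = 1 / fact m"
    using coeff_mult_deg_le[of "esym_const m s" "2 * m" "monom 1 2" 2] deg_le_monom[of 1 2] by simp
  then have c0: "coeff (newton_term s m 0) (2 * Suc m) = 1 / fact m"
    using psum_const_1[OF s] by (simp add: newton_term_def)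
  have "(\<Sum>i<m. coeff (newton_term s m (Suc i)) (2 * Suc m)) = 0"
    by (intro sum.neutral ballI coeff_eq_0_deg_le[OF deg_le_newton_term[OF IH _ s]]) auto
  then have sum: "(\<Sum>i<Suc m. coeff (newton_term s m i) (2 * Suc m)) = 1 / fact m"
    by (simp only: sum.lessThan_Suc_shift c0)
  have "coeff (esym_const (Suc m) s) (2 * Suc m)
      = 1 / real (Suc m) * (\<Sum>i<Suc m. coeff (newton_term s m i) (2 * Suc m))"
    unfolding esym_const_Suc_newton_terms[OF s] by (simp add: coeff_sum)
  also have "\<dots> = 1 / fact (Suc m)" unfolding sum by simp
  finally show ?thesis .
qed

lemma esym_const_Suc_diff:
  assumes IH: "\<And>r. r \<le> m \<Longrightarrow> esym_const_shape r" and s: "s \<in> {1..amax}" and s': "s' \<in> {1..amax}"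
  shows "deg_le (esym_const (Suc m) s - esym_const (Suc m) s'
      - smult (- dev_factor (Suc m) * (psum2_lin s - psum2_lin s')) (monom 1 (2 * Suc m - 3)))
      (2 * int (Suc m) - 4)"
proof -
  let ?D = "psum2_lin s - psum2_lin s'"
  let ?M = "monom (1::real) (2 * m - 1)"
  let ?\<Delta> = "\<lambda>i. newton_term s m i - newton_term s' m i - smult (newton_term_dev m i ?D) ?M"
  have "smult (1 / real (Suc m)) (\<Sum>i<Suc m. smult (newton_term_dev m i ?D) ?M)
      = smult (1 / real (Suc m) * (- (real (Suc m) * dev_factor (Suc m) * ?D))) ?M"
    by (simp only: smult_sum[symmetric] sum_newton_term_dev smult_smult)
  also have "\<dots> = smult (- dev_factor (Suc m) * ?D) (monom 1 (2 * Suc m - 3))"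
    by (simp del: of_nat_Suc)
  finally have "esym_const (Suc m) s - esym_const (Suc m) s'
      - smult (- dev_factor (Suc m) * ?D) (monom 1 (2 * Suc m - 3))
      = smult (1 / real (Suc m)) (\<Sum>i<Suc m. ?\<Delta> i)"
    unfolding esym_const_Suc_newton_terms[OF s] esym_const_Suc_newton_terms[OF s']
    by (simp add: sum_subtractf smult_diff_right)
  moreover have "deg_le (\<Sum>i<Suc m. ?\<Delta> i) (2 * int m - 2)"
    by (intro deg_le_sum newton_term_diff[OF IH s s']) auto
  ultimately show ?thesis by (simp add: deg_le_smult)
qed

lemma esym_const_shape_Suc:
  assumes IH: "\<And>r. r \<le> m \<Longrightarrow> esym_const_shape r"
  shows "esym_const_shape (Suc m)"
  unfolding esym_const_shape_def
proof (intro ballI conjI)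
  fix s s' assume s: "s \<in> {1..amax}" and s': "s' \<in> {1..amax}"
  show "deg_le (esym_const (Suc m) s) (2 * int (Suc m))"
    unfolding esym_const_Suc_newton_terms[OF s]
    by (intro deg_le_smult deg_le_sum) (auto intro: deg_le_mono[OF deg_le_newton_term[OF IH _ s]])
  show "coeff (esym_const (Suc m) s) (2 * Suc m) = 1 / fact (Suc m)"
    by (rule coeff_esym_const_Suc_top[OF IH s])
  show "deg_le (esym_const (Suc m) s - esym_const (Suc m) s'
      - smult (- dev_factor (Suc m) * (psum2_lin s - psum2_lin s')) (monom 1 (2 * Suc m - 3)))
      (2 * int (Suc m) - 4)"
    by (rule esym_const_Suc_diff[OF IH s s'])
qed

lemma esym_const_shape_all: "esym_const_shape q"
proof (induction q rule: less_induct)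
  case (less q)
  then show ?case by (cases q) (simp_all add: esym_const_shape_0 esym_const_shape_Suc)
qed

section \<open>The period\<close>

lemma u_rider_constituent:
  assumes "s \<in> {1..amax}"
  shows "real (u_rider c d q (amax * J + s)) = poly (esym_const q s) (real (amax * J + s))"
  using u_rider_eq_elem_sym[of q "amax * J + s"] constituent_eq[OF quasipoly_line_esym assms, of q J]
  unfolding esym_const_def line_esym_def by simp

lemma u_rider_poly:
  assumes "n \<ge> 1"
  shows "real (u_rider c d q n) = poly (esym_const q (if n mod amax = 0 then amax else n mod amax)) (real n)"
proof -
  define s where "s = (n - 1) mod amax + 1"
  define J where "J = (n - 1) div amax"
  have "(n - 1) mod amax < amax" using amax_ge1 by simp
  then have s: "s \<in> {1..amax}" by (simp add: s_def)
  have n: "n = amax * J + s" using assms unfolding s_def J_def by (metis add.commute div_mult_mod_eq le_add_diff_inverse mult.commute add.left_commute)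
  have "s = (if n mod amax = 0 then amax else n mod amax)" unfolding s_def by (rule Suc_pred_mod[OF amax_ge1 assms])
  then show ?thesis using u_rider_constituent[OF s, of q J] n by simp
qed

lemma is_quasi_period_amax: "is_quasi_period (u_rider c d q) amax"
  unfolding is_quasi_period_def
proof (intro conjI exI allI impI)
  show "0 < amax" using amax_ge1 by simp
  fix n :: nat assume "1 \<le> n"
  then show "real (u_rider c d q n) = poly ((\<lambda>r. esym_const q (if r = 0 then amax else r)) (n mod amax)) (real n)"
    using u_rider_poly by simp
qed

lemma psum2_lin_formula:
  assumes "s \<in> {1..amax}"
  shows "psum2_lin s = (real amax - real bmin) * real s * (real amax - real s) / (real amax)^2 + real bmin / 3"
  unfolding psum2_lin_def psum_const_2[OF assms] psum2_poly_def using amax_ge1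
  by (simp add: field_simps power2_eq_square)

lemma quasi_period_constituent:
  assumes "is_quasi_period (u_rider c d q) p"
  obtains P where "\<And>s. s \<in> {1..amax} \<Longrightarrow> P (s mod p) = esym_const q s"
proof -
  obtain P where P: "\<And>n. n \<ge> 1 \<Longrightarrow> real (u_rider c d q n) = poly (P (n mod p)) (real n)"
    using assms unfolding is_quasi_period_def by blast
  have "P (s mod p) = esym_const q s" if s: "s \<in> {1..amax}" for s
  proof (rule poly_eq_on_progression)
    show "amax * p \<ge> 1" using amax_ge1 assms by (simp add: is_quasi_period_def)
    fix J
    have "(amax * p * J + s) mod p = s mod p"
      by (metis mod_mult_self2 mult.commute mult.left_commute add.commute)
    then show "poly (P (s mod p)) (real (amax * p * J + s)) = poly (esym_const q s) (real (amax * p * J + s))"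
      using P[of "amax * p * J + s"] u_rider_constituent[OF s, of q "p * J"] s
      by (simp add: mult.assoc)
  qed
  then show thesis by (rule that)
qed

text \<open>The residues \<open>amax\<close> and \<open>amax - p\<close> are congruent modulo \<open>p\<close>, but their constituents
  already differ in the coefficient of \<open>n ^ (2 * q - 3)\<close>.\<close>

lemma not_quasi_period_less:
  assumes q: "q \<ge> 2" and ab: "amax \<noteq> bmin" and p0: "0 < p" and pa: "p < amax"
  shows "\<not> is_quasi_period (u_rider c d q) p"
proof
  assume "is_quasi_period (u_rider c d q) p"
  then obtain P where P: "\<And>s. s \<in> {1..amax} \<Longrightarrow> P (s mod p) = esym_const q s"
    by (rule quasi_period_constituent) blast
  have sa: "amax \<in> {1..amax}" and sap: "amax - p \<in> {1..amax}" using amax_ge1 pa p0 by auto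
  have "(amax - p) mod p = amax mod p" using le_mod_geq[of p amax] pa by simp
  then have eq: "esym_const q amax = esym_const q (amax - p)" using P[OF sa] P[OF sap] by simp
  let ?D = "psum2_lin amax - psum2_lin (amax - p)"
  have "deg_le (esym_const q amax - esym_const q (amax - p) - smult (- dev_factor q * ?D) (monom 1 (2 * q - 3))) (2 * int q - 4)"
    using esym_const_shape_all[of q] sa sap unfolding esym_const_shape_def by blast
  then have "deg_le (smult (dev_factor q * ?D) (monom 1 (2 * q - 3))) (2 * int q - 4)"
    using eq by simp
  then have "coeff (smult (dev_factor q * ?D) (monom 1 (2 * q - 3))) (2 * q - 3) = 0"
    by (rule coeff_eq_0_deg_le) (use q in simp)
  moreover have "dev_factor q > 0" using q by (simp add: dev_factor_def)
  moreover have "?D = - ((real amax - real bmin) * real p * (real amax - real p) / (real amax)^2)"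
    unfolding psum2_lin_formula[OF sa] psum2_lin_formula[OF sap] using pa by (simp add: of_nat_diff field_simps)
  moreover have "(real amax - real bmin) * real p * (real amax - real p) / (real amax)^2 \<noteq> 0"
    using ab pa p0 amax_ge1 by simp
  ultimately show False by simp
qed

lemma amax_eq_1_if_eq_bmin:
  assumes "gcd c d = 1" "amax = bmin"
  shows "amax = 1"
proof -
  have "\<bar>d\<bar> = \<bar>c\<bar>"
    using assms(2) unfolding amax_def bmin_def
    by (cases "\<bar>c\<bar> \<le> \<bar>d\<bar>") (simp_all add: max_def min_def eq_nat_nat_iff)
  moreover have "gcd \<bar>c\<bar> \<bar>d\<bar> = 1" using assms(1) by simp
  ultimately show ?thesis unfolding amax_def by (simp add: gcd_idem_int)
qed

lemma quasi_period_u_rider: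
  assumes "gcd c d = 1" "q \<ge> 2"
  shows "quasi_period (u_rider c d q) = amax"
  unfolding quasi_period_def
proof (rule Least_equality)
  show "is_quasi_period (u_rider c d q) amax" by (rule is_quasi_period_amax)
next
  fix p assume p: "is_quasi_period (u_rider c d q) p"
  show "amax \<le> p"
  proof (rule ccontr)
    assume "\<not> amax \<le> p"
    moreover have "0 < p" using p by (simp add: is_quasi_period_def)
    moreover have "amax \<noteq> bmin" using amax_eq_1_if_eq_bmin[OF assms(1)] calculation by auto
    ultimately show False using not_quasi_period_less[OF assms(2)] p by simp
  qed
qed
end

theorem theorem4p2:
  fixes c d :: int and q :: nat
  assumes "(c, d) \<noteq> (0, 0)" and "gcd c d = 1" and "q \<ge> 2"
  shows "(\<exists>p. is_quasi_period (u_rider c d q) p) \<and>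
         quasi_period (u_rider c d q) = nat (max \<bar>c\<bar> \<bar>d\<bar>)"
proof -
  interpret rider c d by unfold_locales (rule assms(1))
  show ?thesis
    using is_quasi_period_amax quasi_period_u_rider[OF assms(2,3)] by (auto simp: amax_def)
qed

end
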